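(* Let $\bm{f} = (f_1, \ldots, f_p) \subset \mathbb{Z}[x_1, \ldots, x_n]$, $\bm{A} = (a_{i,j}) \in \mathrm{GL}_n(\mathbb{Z})$ and $\bm{u} = (u_1, \ldots, u_p) \in \mathbb{Z}^p$ with $\deg(f_i) \le d$, $\mathrm{ht}(f_i) \le b$ and $\mathrm{ht}(u_i) \le b$ for $1 \le i \le p$, and $\mathrm{ht}(a_{i,j}) \le b$ for $1 \le i,j \le n$. Then there exists a straight-line program $\Gamma$ of length $O\left(p\binom{n+d}{d} + pn\right)$ using integer constants of height in $O(b)$ which evaluates the polynomial system \[ \left(f_1^{\bm A},\dots,f_p^{\bm A},\ [\ell_1 \cdots \ell_p]\,\mathrm{jac}(\bm{f}^{\bm A}, 1),\ u_1\ell_1 + \cdots + u_p\ell_p - 1\right) \] in the variables $x_1,\dots,x_n,\ell_1,\dots,\ell_p$.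
   Context: $f_j^{\bm A}$ denotes the polynomial $f_j(\bm A\bm x)$ where $\bm x=(x_1,\dots,x_n)^T$; $\ell_1,\dots,\ell_p$ are new indeterminates; $\mathrm{jac}(\bm f^{\bm A},1)$ is the $p\times(n-1)$ matrix $(\partial f_j^{\bm A}/\partial x_k)_{1\le j\le p,\,2\le k\le n}$, so $[\ell_1\cdots\ell_p]\,\mathrm{jac}(\bm f^{\bm A},1)$ is a row of $n-1$ polynomials. A straight-line program is a sequence of arithmetic operations ($+,-,\times$) on inputs, constants, and earlier results; its length is the number of operations, and it evaluates a sequence of polynomials if those appear among its computed results. The height of a nonzero integer $a$ is $\log_2|a|$; the height of an integer polynomial is the maximum height of its coefficients. *)

theory Defs
  imports "HOL-Library.Poly_Mapping" "Jordan_Normal_Form.Matrix"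
begin

text \<open>Multivariate integer polynomials: finitely supported maps from monomials
(exponent vectors, variable i is indexed by the natural number i) to coefficients.\<close>
type_synonym mpoly = "(nat \<Rightarrow>\<^sub>0 nat) \<Rightarrow>\<^sub>0 int"

definition mVar :: "nat \<Rightarrow> mpoly" where
  "mVar i = Poly_Mapping.single (Poly_Mapping.single i 1) 1"

definition mConst :: "int \<Rightarrow> mpoly" where
  "mConst c = Poly_Mapping.single 0 c"

definition mon_deg :: "(nat \<Rightarrow>\<^sub>0 nat) \<Rightarrow> nat" where
  "mon_deg m = (\<Sum>i\<in>Poly_Mapping.keys m. Poly_Mapping.lookup m i)"

text \<open>Total degree at most d (the zero polynomial has degree -infinity).\<close>
definition deg_le :: "mpoly \<Rightarrow> nat \<Rightarrow> bool" where
  "deg_le f d \<longleftrightarrow> (\<forall>m\<in>Poly_Mapping.keys f. mon_deg m \<le> d)"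

definition mvars :: "mpoly \<Rightarrow> nat set" where
  "mvars f = (\<Union>m\<in>Poly_Mapping.keys f. Poly_Mapping.keys m)"

text \<open>Height of an integer: log2 |a| (for a = 0 this is 0 by Isabelle's convention log 0 = 0).\<close>
definition ht :: "int \<Rightarrow> real" where
  "ht a = log 2 \<bar>real_of_int a\<bar>"

definition poly_ht_le :: "mpoly \<Rightarrow> real \<Rightarrow> bool" where
  "poly_ht_le f b \<longleftrightarrow> (\<forall>m\<in>Poly_Mapping.keys f. ht (Poly_Mapping.lookup f m) \<le> b)"

definition msubst :: "(nat \<Rightarrow> mpoly) \<Rightarrow> mpoly \<Rightarrow> mpoly" where
  "msubst \<sigma> f = (\<Sum>m\<in>Poly_Mapping.keys f. mConst (Poly_Mapping.lookup f m) * (\<Prod>i\<in>Poly_Mapping.keys m. \<sigma> i ^ Poly_Mapping.lookup m i))"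

text \<open>f^A = f(A x), for an n x n matrix A: x_i is replaced by sum_j a_ij x_j.\<close>
definition mtransform :: "nat \<Rightarrow> int mat \<Rightarrow> mpoly \<Rightarrow> mpoly" where
  "mtransform n A f = msubst (\<lambda>i. \<Sum>j<n. mConst (A $$ (i, j)) * mVar j) f"

definition mpderiv :: "nat \<Rightarrow> mpoly \<Rightarrow> mpoly" where
  "mpderiv k f = (\<Sum>m\<in>Poly_Mapping.keys f.
      Poly_Mapping.single (m - Poly_Mapping.single k 1) (int (Poly_Mapping.lookup m k) * Poly_Mapping.lookup f m))"

text \<open>Straight-line programs. Operands: input variable i, an integer constant,
or the result of an earlier operation (0-indexed).\<close>
datatype operand = Inp nat | Cst int | Res nat
datatype arith_op = OAdd | OSub | OMul
type_synonym instr = "arith_op \<times> operand \<times> operand"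

definition operand_ok :: "nat \<Rightarrow> nat \<Rightarrow> operand \<Rightarrow> bool" where
  "operand_ok ninp k opd \<longleftrightarrow> (case opd of Inp i \<Rightarrow> i < ninp | Cst c \<Rightarrow> True | Res j \<Rightarrow> j < k)"

definition slp_wf :: "nat \<Rightarrow> instr list \<Rightarrow> bool" where
  "slp_wf ninp \<Gamma> \<longleftrightarrow> (\<forall>k<length \<Gamma>. case \<Gamma> ! k of (_, o1, o2) \<Rightarrow>
      operand_ok ninp k o1 \<and> operand_ok ninp k o2)"

fun operand_val :: "mpoly list \<Rightarrow> operand \<Rightarrow> mpoly" where
  "operand_val rs (Inp i) = mVar i"
| "operand_val rs (Cst c) = mConst c"
| "operand_val rs (Res j) = rs ! j"

fun op_apply :: "arith_op \<Rightarrow> mpoly \<Rightarrow> mpoly \<Rightarrow> mpoly" where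
  "op_apply OAdd a b = a + b"
| "op_apply OSub a b = a - b"
| "op_apply OMul a b = a * b"

text \<open>The list of computed results (as polynomials in the inputs, input i being mVar i).\<close>
definition slp_results :: "instr list \<Rightarrow> mpoly list" where
  "slp_results \<Gamma> = foldl (\<lambda>rs (oper, o1, o2).
       rs @ [op_apply oper (operand_val rs o1) (operand_val rs o2)]) [] \<Gamma>"

fun operand_consts :: "operand \<Rightarrow> int set" where
  "operand_consts (Cst c) = {c}"
| "operand_consts _ = {}"

definition slp_consts :: "instr list \<Rightarrow> int set" where
  "slp_consts \<Gamma> = (\<Union>(_, o1, o2)\<in>set \<Gamma>. operand_consts o1 \<union> operand_consts o2)"

text \<open>The target system. Variables x_1..x_n are mVar 0..n-1, l_1..l_p are mVar n..n+p-1.\<close>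
definition target_system :: "nat \<Rightarrow> int mat \<Rightarrow> mpoly list \<Rightarrow> int list \<Rightarrow> mpoly list" where
  "target_system n A f u =
     (let p = length f; fA = map (mtransform n A) f in
      fA
      @ map (\<lambda>k. \<Sum>j<p. mVar (n + j) * mpderiv k (fA ! j)) [1..<n]
      @ [(\<Sum>j<p. mConst (u ! j) * mVar (n + j)) - 1])"

end

(* Write y = A x. Then f_j^A = sum_m c_j(m) y^m over the monomials m of degree at most d in n
   variables, and by the chain rule the entries of [l_1 ... l_p] jac(f^A, 1) are
   sum_i a_ik (dg/dy_i)(y) with g = sum_j l_j f_j.

   For d >= 2 the n^2 operations computing y are affordable, as n^2 <= 2 binom(n+2,2). Each
   monomial y^m is one multiplication away from one of smaller degree, and the gradient of g,
   whose coefficients are the linear forms gamma(m) = sum_j c_j(m) l_j, is read off the Horner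
   scheme of g on the tree of monomials in O(binom(n+d,d)) operations, as in reverse-mode
   differentiation.

   For d <= 1 there is no room for y, and all polynomials are linear forms whose integer
   coefficients w = sum_i c_j(e_i) a_ik have height up to 2b + log n. Such a coefficient is split
   as w = K q + r with K = floor(2^b)^2, 0 <= r < K and |q| <= n; the multiples q l_j are
   precomputed by repeated additions, and sums weighted by such q need additions only, so
   every constant has height at most 2b. *)

theory Submission
  imports Defs
begin

abbreviation lookup :: "('a \<Rightarrow>\<^sub>0 'b::zero) \<Rightarrow> 'a \<Rightarrow> 'b" where
  "lookup \<equiv> Poly_Mapping.lookup"

abbreviation keys :: "('a \<Rightarrow>\<^sub>0 'b::zero) \<Rightarrow> 'a set" where
  "keys \<equiv> Poly_Mapping.keys"

section \<open>Building straight-line programs\<close>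

lemma mConst_eq_of_int: "mConst c = of_int c"
  by (simp add: mConst_def flip: single_of_int)

lemma ht_0 [simp]: "ht 0 = 0" and ht_1 [simp]: "ht 1 = 0"
  by (simp_all add: ht_def log_def)

lemma ht_nonneg: "0 \<le> ht c"
proof (cases "c = 0")
  case False
  then have "1 \<le> \<bar>real_of_int c\<bar>" by linarith
  then show ?thesis by (simp add: ht_def)
qed simp

lemma ht_mono: "0 \<le> a \<Longrightarrow> a \<le> c \<Longrightarrow> ht a \<le> ht c"
  by (cases "a = 0") (simp_all add: ht_nonneg, simp add: ht_def)

lemma ht_lookup_le: "poly_ht_le f b \<Longrightarrow> 0 \<le> b \<Longrightarrow> ht (lookup f m) \<le> b"
  by (cases "m \<in> keys f") (auto simp: poly_ht_le_def in_keys_iff)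

lemma slp_results_snoc:
  "slp_results (\<Gamma> @ [(oper, o1, o2)]) =
     slp_results \<Gamma> @ [op_apply oper (operand_val (slp_results \<Gamma>) o1) (operand_val (slp_results \<Gamma>) o2)]"
  by (simp add: slp_results_def)

lemma length_slp_results [simp]: "length (slp_results \<Gamma>) = length \<Gamma>"
  by (induction \<Gamma> rule: rev_induct) (auto simp: slp_results_snoc, simp add: slp_results_def)

lemma slp_consts_snoc:
  "slp_consts (\<Gamma> @ [(oper, o1, o2)]) = slp_consts \<Gamma> \<union> operand_consts o1 \<union> operand_consts o2"
  by (auto simp: slp_consts_def)

lemma slp_wf_snoc:
  "slp_wf N \<Gamma> \<Longrightarrow> operand_ok N (length \<Gamma>) o1 \<Longrightarrow> operand_ok N (length \<Gamma>) o2 \<Longrightarrow>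
   slp_wf N (\<Gamma> @ [(oper, o1, o2)])"
  by (auto simp: slp_wf_def nth_append less_Suc_eq)

definition slp_ok :: "nat \<Rightarrow> real \<Rightarrow> instr list \<Rightarrow> bool" where
  "slp_ok N B \<Gamma> \<longleftrightarrow> slp_wf N \<Gamma> \<and> (\<forall>c\<in>slp_consts \<Gamma>. ht c \<le> B)"

definition computed :: "instr list \<Rightarrow> mpoly set" where
  "computed \<Gamma> = set (slp_results \<Gamma>)"

definition available :: "nat \<Rightarrow> real \<Rightarrow> mpoly set \<Rightarrow> mpoly \<Rightarrow> bool" where
  "available N B S g \<longleftrightarrow> g \<in> S \<or> (\<exists>i<N. g = mVar i) \<or> (\<exists>c. ht c \<le> B \<and> g = of_int c)"

definition slp_extends :: "nat \<Rightarrow> real \<Rightarrow> instr list \<Rightarrow> instr list \<Rightarrow> nat \<Rightarrow> bool" where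
  "slp_extends N B \<Gamma> \<Gamma>' k \<longleftrightarrow>
     slp_ok N B \<Gamma>' \<and> computed \<Gamma> \<subseteq> computed \<Gamma>' \<and> length \<Gamma>' \<le> length \<Gamma> + k"

lemma slp_ok_Nil: "slp_ok N B []"
  by (simp add: slp_ok_def slp_wf_def slp_consts_def)

lemma available_mono: "available N B S g \<Longrightarrow> S \<subseteq> S' \<Longrightarrow> available N B S' g"
  unfolding available_def by blast

lemma available_member: "g \<in> S \<Longrightarrow> available N B S g"
  unfolding available_def by blast

lemma available_mVar: "i < N \<Longrightarrow> available N B S (mVar i)"
  unfolding available_def by blast

lemma available_of_int: "ht c \<le> B \<Longrightarrow> available N B S (of_int c)"
  unfolding available_def by blast

lemma available_0: "0 \<le> B \<Longrightarrow> available N B S 0"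
  using available_of_int[of 0 B N S] by simp

lemma available_1: "0 \<le> B \<Longrightarrow> available N B S 1"
  using available_of_int[of 1 B N S] by simp

lemma slp_extends_refl: "slp_ok N B \<Gamma> \<Longrightarrow> slp_extends N B \<Gamma> \<Gamma> 0"
  by (simp add: slp_extends_def)

lemma slp_extends_trans:
  "slp_extends N B \<Gamma>1 \<Gamma>2 k1 \<Longrightarrow> slp_extends N B \<Gamma>2 \<Gamma>3 k2 \<Longrightarrow> slp_extends N B \<Gamma>1 \<Gamma>3 (k1 + k2)"
  by (auto simp: slp_extends_def)

lemma slp_extends_mono: "slp_extends N B \<Gamma> \<Gamma>' k \<Longrightarrow> k \<le> k' \<Longrightarrow> slp_extends N B \<Gamma> \<Gamma>' k'"
  by (auto simp: slp_extends_def)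

lemma slp_extends_ok: "slp_extends N B \<Gamma> \<Gamma>' k \<Longrightarrow> slp_ok N B \<Gamma>'"
  by (simp add: slp_extends_def)

lemma slp_extends_computed: "slp_extends N B \<Gamma> \<Gamma>' k \<Longrightarrow> computed \<Gamma> \<subseteq> computed \<Gamma>'"
  by (simp add: slp_extends_def)

lemma slp_ok_mono: "slp_ok N B \<Gamma> \<Longrightarrow> B \<le> B' \<Longrightarrow> slp_ok N B' \<Gamma>"
  by (auto simp: slp_ok_def)

lemma slp_extends_Nil: "slp_extends N B [] \<Gamma> k \<longleftrightarrow> slp_ok N B \<Gamma> \<and> length \<Gamma> \<le> k"
  by (simp add: slp_extends_def computed_def slp_results_def)

lemma slp_extends_available:
  assumes "slp_extends N B \<Gamma> \<Gamma>' k" and "available N B (computed \<Gamma>) g"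
  shows "available N B (computed \<Gamma>') g"
  using available_mono[OF assms(2) slp_extends_computed[OF assms(1)]] .

lemma available_operand:
  assumes "available N B (computed \<Gamma>) g"
  obtains opd where "operand_ok N (length \<Gamma>) opd" "operand_val (slp_results \<Gamma>) opd = g"
    "\<forall>c\<in>operand_consts opd. ht c \<le> B"
proof -
  consider "g \<in> computed \<Gamma>" | "\<exists>i<N. g = mVar i" | "\<exists>c. ht c \<le> B \<and> g = of_int c"
    using assms unfolding available_def by blast
  then show ?thesis
  proof cases
    case 1
    then obtain j where "j < length \<Gamma>" "slp_results \<Gamma> ! j = g"
      unfolding computed_def by (metis in_set_conv_nth length_slp_results)
    then show ?thesis by (intro that[of "Res j"]) (simp_all add: operand_ok_def)
  next
    case 2
    then show ?thesis by (auto intro: that[of "Inp _"] simp: operand_ok_def)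
  next
    case 3
    then show ?thesis by (auto intro: that[of "Cst _"] simp: operand_ok_def mConst_eq_of_int)
  qed
qed

lemma slp_extends_op:
  assumes "slp_ok N B \<Gamma>" "available N B (computed \<Gamma>) a" "available N B (computed \<Gamma>) b"
  shows "\<exists>\<Gamma>'. slp_extends N B \<Gamma> \<Gamma>' 1 \<and> op_apply oper a b \<in> computed \<Gamma>'"
proof -
  obtain o1 where o1: "operand_ok N (length \<Gamma>) o1" "operand_val (slp_results \<Gamma>) o1 = a"
    "\<forall>c\<in>operand_consts o1. ht c \<le> B" using available_operand[OF assms(2)] .
  obtain o2 where o2: "operand_ok N (length \<Gamma>) o2" "operand_val (slp_results \<Gamma>) o2 = b"
    "\<forall>c\<in>operand_consts o2. ht c \<le> B" using available_operand[OF assms(3)] .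
  let ?\<Gamma>' = "\<Gamma> @ [(oper, o1, o2)]"
  have "slp_ok N B ?\<Gamma>'"
    using assms(1) o1 o2 by (auto simp: slp_ok_def slp_consts_snoc intro: slp_wf_snoc)
  moreover have "computed \<Gamma> \<subseteq> computed ?\<Gamma>'" "op_apply oper a b \<in> computed ?\<Gamma>'"
    by (auto simp: computed_def slp_results_snoc o1 o2)
  ultimately show ?thesis by (auto simp: slp_extends_def)
qed

lemma slp_extends_op_after:
  assumes "slp_extends N B \<Gamma>0 \<Gamma> k" "available N B (computed \<Gamma>) a" "available N B (computed \<Gamma>) b"
  shows "\<exists>\<Gamma>'. slp_extends N B \<Gamma>0 \<Gamma>' (k + 1) \<and> computed \<Gamma> \<subseteq> computed \<Gamma>' \<and>
           op_apply oper a b \<in> computed \<Gamma>'"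
  using slp_extends_op[OF slp_extends_ok[OF assms(1)] assms(2,3), of oper]
    slp_extends_trans[OF assms(1)] slp_extends_computed by blast

lemma slp_extends_family:
  assumes "finite I" and "slp_ok N B \<Gamma>"
    and step: "\<And>i \<Gamma>1. i \<in> I \<Longrightarrow> slp_ok N B \<Gamma>1 \<Longrightarrow> computed \<Gamma> \<subseteq> computed \<Gamma>1 \<Longrightarrow>
        \<exists>\<Gamma>2. slp_extends N B \<Gamma>1 \<Gamma>2 (c i) \<and> P i (computed \<Gamma>2)"
    and mono: "\<And>i S S'. P i S \<Longrightarrow> S \<subseteq> S' \<Longrightarrow> P i S'"
  shows "\<exists>\<Gamma>'. slp_extends N B \<Gamma> \<Gamma>' (\<Sum>i\<in>I. c i) \<and> (\<forall>i\<in>I. P i (computed \<Gamma>'))"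
  using assms(1) step
proof (induction I rule: finite_induct)
  case empty
  then show ?case using slp_extends_refl[OF assms(2)] by auto
next
  case (insert x F)
  then obtain \<Gamma>1 where \<Gamma>1: "slp_extends N B \<Gamma> \<Gamma>1 (\<Sum>i\<in>F. c i)" "\<forall>i\<in>F. P i (computed \<Gamma>1)"
    by blast
  then obtain \<Gamma>2 where \<Gamma>2: "slp_extends N B \<Gamma>1 \<Gamma>2 (c x)" "P x (computed \<Gamma>2)"
    using insert.prems[of x \<Gamma>1] by (auto simp: slp_extends_def)
  have "slp_extends N B \<Gamma> \<Gamma>2 (\<Sum>i\<in>insert x F. c i)"
    using slp_extends_trans[OF \<Gamma>1(1) \<Gamma>2(1)] insert.hyps by (simp add: add.commute)
  moreover have "\<forall>i\<in>insert x F. P i (computed \<Gamma>2)"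
    using \<Gamma>1(2) \<Gamma>2 mono by (auto simp: slp_extends_def)
  ultimately show ?case by blast
qed

lemma slp_extends_each:
  assumes "finite I" and "slp_ok N B \<Gamma>"
    and "\<And>i \<Gamma>1. i \<in> I \<Longrightarrow> slp_ok N B \<Gamma>1 \<Longrightarrow> computed \<Gamma> \<subseteq> computed \<Gamma>1 \<Longrightarrow>
        \<exists>\<Gamma>2. slp_extends N B \<Gamma>1 \<Gamma>2 (c i) \<and> g i \<in> computed \<Gamma>2"
  shows "\<exists>\<Gamma>'. slp_extends N B \<Gamma> \<Gamma>' (\<Sum>i\<in>I. c i) \<and> (\<forall>i\<in>I. g i \<in> computed \<Gamma>')"
  by (rule slp_extends_family[OF assms]) auto

lemma slp_extends_by_rank:
  fixes rank :: "'a \<Rightarrow> nat"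
  assumes "finite M" and "slp_ok N B \<Gamma>"
    and step: "\<And>m \<Gamma>1. m \<in> M \<Longrightarrow> slp_ok N B \<Gamma>1 \<Longrightarrow> computed \<Gamma> \<subseteq> computed \<Gamma>1 \<Longrightarrow>
        (\<forall>m'\<in>M. rank m' < rank m \<longrightarrow> available N B (computed \<Gamma>1) (g m')) \<Longrightarrow>
        \<exists>\<Gamma>2. slp_extends N B \<Gamma>1 \<Gamma>2 (c m) \<and> available N B (computed \<Gamma>2) (g m)"
  shows "\<exists>\<Gamma>'. slp_extends N B \<Gamma> \<Gamma>' (\<Sum>m\<in>M. c m) \<and> (\<forall>m\<in>M. available N B (computed \<Gamma>') (g m))"
proof -
  let ?below = "\<lambda>t. {m\<in>M. rank m < t}"
  have layers: "\<exists>\<Gamma>'. slp_extends N B \<Gamma> \<Gamma>' (\<Sum>m\<in>?below t. c m) \<and>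
          (\<forall>m\<in>?below t. available N B (computed \<Gamma>') (g m))" for t
  proof (induction t)
    case 0
    show ?case using slp_extends_refl[OF assms(2)] by auto
  next
    case (Suc t)
    then obtain \<Gamma>1 where \<Gamma>1: "slp_extends N B \<Gamma> \<Gamma>1 (\<Sum>m\<in>?below t. c m)"
      "\<forall>m\<in>?below t. available N B (computed \<Gamma>1) (g m)" by blast
    let ?layer = "{m\<in>M. rank m = t}"
    obtain \<Gamma>2 where \<Gamma>2: "slp_extends N B \<Gamma>1 \<Gamma>2 (\<Sum>m\<in>?layer. c m)"
      "\<forall>m\<in>?layer. available N B (computed \<Gamma>2) (g m)"
    proof -
      have "\<exists>\<Gamma>2. slp_extends N B \<Gamma>1 \<Gamma>2 (\<Sum>m\<in>?layer. c m) \<and>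
          (\<forall>m\<in>?layer. available N B (computed \<Gamma>2) (g m))"
      proof (rule slp_extends_family[OF _ slp_extends_ok[OF \<Gamma>1(1)]])
        fix m \<Gamma>2 assume m: "m \<in> ?layer" and \<Gamma>2: "slp_ok N B \<Gamma>2" "computed \<Gamma>1 \<subseteq> computed \<Gamma>2"
        have "computed \<Gamma> \<subseteq> computed \<Gamma>2"
          using slp_extends_computed[OF \<Gamma>1(1)] \<Gamma>2(2) by blast
        moreover have "\<forall>m'\<in>M. rank m' < rank m \<longrightarrow> available N B (computed \<Gamma>2) (g m')"
          using \<Gamma>1(2) m \<Gamma>2(2) available_mono by auto
        ultimately show "\<exists>\<Gamma>3. slp_extends N B \<Gamma>2 \<Gamma>3 (c m) \<and> available N B (computed \<Gamma>3) (g m)"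
          using step m \<Gamma>2(1) by blast
      qed (use assms(1) in \<open>auto intro: available_mono\<close>)
      then show ?thesis using that by blast
    qed
    have "?below (Suc t) = ?below t \<union> ?layer" "?below t \<inter> ?layer = {}" by auto
    then have "(\<Sum>m\<in>?below (Suc t). c m) = (\<Sum>m\<in>?below t. c m) + (\<Sum>m\<in>?layer. c m)"
      using assms(1) by (simp add: sum.union_disjoint)
    moreover have "\<forall>m\<in>?below (Suc t). available N B (computed \<Gamma>2) (g m)"
      using \<Gamma>1(2) \<Gamma>2 slp_extends_computed available_mono less_Suc_eq by fastforce
    ultimately show ?case using slp_extends_trans[OF \<Gamma>1(1) \<Gamma>2(1)] by auto
  qed
  obtain t where "\<forall>m\<in>M. rank m < t"
    using assms(1) finite_nat_set_iff_bounded[of "rank ` M"] by blast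
  then have "?below t = M" by auto
  with layers[of t] show ?thesis by (simp only:)
qed

lemma slp_extends_sum:
  assumes "finite I" and "slp_ok N B \<Gamma>" and "0 \<le> B"
    and "\<And>i. i \<in> I \<Longrightarrow> available N B (computed \<Gamma>) (h i)"
  shows "\<exists>\<Gamma>'. slp_extends N B \<Gamma> \<Gamma>' (card I + 1) \<and> (\<Sum>i\<in>I. h i) \<in> computed \<Gamma>'"
  using assms(1,4)
proof (induction I rule: finite_induct)
  case empty
  show ?case
    using slp_extends_op[OF assms(2) available_0[OF assms(3)] available_0[OF assms(3)], of OAdd]
    by simp
next
  case (insert x F)
  then obtain \<Gamma>1 where \<Gamma>1: "slp_extends N B \<Gamma> \<Gamma>1 (card F + 1)" "(\<Sum>i\<in>F. h i) \<in> computed \<Gamma>1"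
    by blast
  have "available N B (computed \<Gamma>1) (h x)"
    using insert.prems slp_extends_computed[OF \<Gamma>1(1)] available_mono by blast
  then obtain \<Gamma>' where "slp_extends N B \<Gamma> \<Gamma>' (card F + 1 + 1)" "h x + (\<Sum>i\<in>F. h i) \<in> computed \<Gamma>'"
    using slp_extends_op_after[OF \<Gamma>1(1) _ available_member[OF \<Gamma>1(2)], of "h x" OAdd] by auto
  then show ?case using insert.hyps by auto
qed

lemma slp_extends_sum_products:
  assumes "finite I" and "slp_ok N B \<Gamma>" and "0 \<le> B"
    and "\<And>i. i \<in> I \<Longrightarrow> available N B (computed \<Gamma>) (g i)"
    and "\<And>i. i \<in> I \<Longrightarrow> available N B (computed \<Gamma>) (h i)"
  shows "\<exists>\<Gamma>'. slp_extends N B \<Gamma> \<Gamma>' (2 * card I + 1) \<and> (\<Sum>i\<in>I. g i * h i) \<in> computed \<Gamma>'"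
proof -
  have "\<exists>\<Gamma>1. slp_extends N B \<Gamma> \<Gamma>1 (\<Sum>i\<in>I. 1) \<and> (\<forall>i\<in>I. g i * h i \<in> computed \<Gamma>1)"
  proof (rule slp_extends_each[OF assms(1,2)])
    fix i \<Gamma>1 assume "i \<in> I" and \<Gamma>1: "slp_ok N B \<Gamma>1" "computed \<Gamma> \<subseteq> computed \<Gamma>1"
    then have "available N B (computed \<Gamma>1) (g i)" "available N B (computed \<Gamma>1) (h i)"
      using assms(4,5) available_mono by blast+
    then show "\<exists>\<Gamma>2. slp_extends N B \<Gamma>1 \<Gamma>2 1 \<and> g i * h i \<in> computed \<Gamma>2"
      using slp_extends_op[OF \<Gamma>1(1), of "g i" "h i" OMul] by simp
  qed
  then obtain \<Gamma>1 where \<Gamma>1: "slp_extends N B \<Gamma> \<Gamma>1 (card I)" "\<forall>i\<in>I. g i * h i \<in> computed \<Gamma>1"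
    by auto
  from \<Gamma>1(2) have "\<And>i. i \<in> I \<Longrightarrow> available N B (computed \<Gamma>1) (g i * h i)"
    by (simp add: available_member)
  from slp_extends_sum[where h="\<lambda>i. g i * h i", OF assms(1) slp_extends_ok[OF \<Gamma>1(1)] assms(3) this]
  obtain \<Gamma>2 where \<Gamma>2: "slp_extends N B \<Gamma>1 \<Gamma>2 (card I + 1)" "(\<Sum>i\<in>I. g i * h i) \<in> computed \<Gamma>2"
    by blast
  have "slp_extends N B \<Gamma> \<Gamma>2 (2 * card I + 1)"
    using slp_extends_trans[OF \<Gamma>1(1) \<Gamma>2(1)] by (simp add: mult_2 add.assoc)
  then show ?thesis using \<Gamma>2(2) by blast
qed

lemma slp_extends_sums_products:
  assumes "finite J" and "\<And>j. j \<in> J \<Longrightarrow> finite (I j)" and "slp_ok N B \<Gamma>" and "0 \<le> B"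
    and "\<And>j i. j \<in> J \<Longrightarrow> i \<in> I j \<Longrightarrow> available N B (computed \<Gamma>) (g j i)"
    and "\<And>j i. j \<in> J \<Longrightarrow> i \<in> I j \<Longrightarrow> available N B (computed \<Gamma>) (h j i)"
  shows "\<exists>\<Gamma>'. slp_extends N B \<Gamma> \<Gamma>' (\<Sum>j\<in>J. 2 * card (I j) + 1) \<and>
            (\<forall>j\<in>J. (\<Sum>i\<in>I j. g j i * h j i) \<in> computed \<Gamma>')"
proof (rule slp_extends_each[OF assms(1,3)])
  fix j \<Gamma>1 assume j: "j \<in> J" and \<Gamma>1: "slp_ok N B \<Gamma>1" "computed \<Gamma> \<subseteq> computed \<Gamma>1"
  show "\<exists>\<Gamma>2. slp_extends N B \<Gamma>1 \<Gamma>2 (2 * card (I j) + 1) \<and> (\<Sum>i\<in>I j. g j i * h j i) \<in> computed \<Gamma>2"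
  proof (rule slp_extends_sum_products[OF assms(2)[OF j] \<Gamma>1(1) assms(4)])
    fix i assume "i \<in> I j"
    then show "available N B (computed \<Gamma>1) (g j i)" "available N B (computed \<Gamma>1) (h j i)"
      using assms(5,6)[OF j] available_mono[OF _ \<Gamma>1(2)] by blast+
  qed
qed

section \<open>Linear combinations with large coefficients\<close>

lemma sum_of_nat_mult_eq_pred_plus:
  fixes h :: "'a \<Rightarrow> 'b::semiring_1"
  assumes "finite I"
  shows "(\<Sum>i\<in>I. of_nat (q i) * h i) = (\<Sum>i\<in>I. of_nat (q i - 1) * h i) + (\<Sum>i\<in>{i\<in>I. 1 \<le> q i}. h i)"
proof -
  have "of_nat (q i) * h i = of_nat (q i - 1) * h i + (if 1 \<le> q i then h i else 0)" for i
    by (cases "q i") (simp_all add: algebra_simps)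
  then show ?thesis
    using assms by (simp add: sum.distrib sum.inter_filter)
qed

text \<open>Only additions occur, so no constant of large height is needed: the combination is the sum
  \<open>T\<close> of the \<open>h i\<close> with \<open>q i \<ge> 1\<close> plus the combination with every \<open>q i\<close> decreased by one.\<close>
lemma slp_extends_nat_comb_and_support_sum:
  assumes "finite I" and "slp_ok N B \<Gamma>" and "0 \<le> B"
    and "\<And>i. i \<in> I \<Longrightarrow> available N B (computed \<Gamma>) (h i)"
    and "\<And>i. i \<in> I \<Longrightarrow> q i \<le> Q"
  shows "\<exists>\<Gamma>'. slp_extends N B \<Gamma> \<Gamma>' (card {i\<in>I. 1 \<le> q i} + 3 * Q) \<and>
           available N B (computed \<Gamma>') (\<Sum>i\<in>I. of_nat (q i) * h i) \<and>
           available N B (computed \<Gamma>') (\<Sum>i\<in>{i\<in>I. 1 \<le> q i}. h i)"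
  using assms(5)
proof (induction Q arbitrary: q)
  case 0
  then have "{i\<in>I. 1 \<le> q i} = {}" "(\<Sum>i\<in>I. of_nat (q i) * h i) = 0" by auto
  then show ?case
    unfolding \<open>{i\<in>I. 1 \<le> q i} = {}\<close>
    using slp_extends_refl[OF assms(2)] available_0[OF assms(3)] by auto
next
  case (Suc Q)
  let ?pos = "\<lambda>q. {i\<in>I. 1 \<le> q i}" and ?ones = "{i\<in>I. q i = 1}"
  let ?T' = "\<Sum>i\<in>?pos (\<lambda>i. q i - 1). h i" and ?A' = "\<Sum>i\<in>I. of_nat (q i - 1) * h i"
  obtain \<Gamma>1 where \<Gamma>1: "slp_extends N B \<Gamma> \<Gamma>1 (card (?pos (\<lambda>i. q i - 1)) + 3 * Q)"
    "available N B (computed \<Gamma>1) ?A'" "available N B (computed \<Gamma>1) ?T'"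
    using Suc.IH[of "\<lambda>i. q i - 1"] Suc.prems by fastforce
  obtain \<Gamma>2 where \<Gamma>2: "slp_extends N B \<Gamma>1 \<Gamma>2 (card ?ones + 1)" "(\<Sum>i\<in>?ones. h i) \<in> computed \<Gamma>2"
    using slp_extends_sum[OF _ slp_extends_ok[OF \<Gamma>1(1)] assms(3), of ?ones h] assms(1,4)
      slp_extends_computed[OF \<Gamma>1(1)] available_mono by fastforce
  note \<Gamma>12 = slp_extends_trans[OF \<Gamma>1(1) \<Gamma>2(1)]
  obtain \<Gamma>3 where \<Gamma>3: "slp_extends N B \<Gamma> \<Gamma>3 (card (?pos (\<lambda>i. q i - 1)) + 3 * Q + (card ?ones + 1) + 1)"
    "computed \<Gamma>2 \<subseteq> computed \<Gamma>3" "?T' + (\<Sum>i\<in>?ones. h i) \<in> computed \<Gamma>3"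
    using slp_extends_op_after[OF \<Gamma>12 _ available_member[OF \<Gamma>2(2)], of ?T' OAdd]
      \<Gamma>1(3) slp_extends_computed[OF \<Gamma>2(1)] available_mono by auto
  have split: "?pos q = ?pos (\<lambda>i. q i - 1) \<union> ?ones" "?pos (\<lambda>i. q i - 1) \<inter> ?ones = {}"
    by auto
  then have T: "?T' + (\<Sum>i\<in>?ones. h i) = (\<Sum>i\<in>?pos q. h i)"
    using assms(1) by (simp add: sum.union_disjoint)
  obtain \<Gamma>4 where \<Gamma>4:
    "slp_extends N B \<Gamma> \<Gamma>4 (card (?pos (\<lambda>i. q i - 1)) + 3 * Q + (card ?ones + 1) + 1 + 1)"
    "computed \<Gamma>3 \<subseteq> computed \<Gamma>4" "?A' + (\<Sum>i\<in>?pos q. h i) \<in> computed \<Gamma>4"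
    using slp_extends_op_after[OF \<Gamma>3(1) _ available_member[OF \<Gamma>3(3)], of ?A' OAdd] T
      \<Gamma>1(2) slp_extends_computed[OF \<Gamma>2(1)] \<Gamma>3(2) available_mono by auto
  have "card (?pos q) = card (?pos (\<lambda>i. q i - 1)) + card ?ones"
    using split assms(1) by (simp add: card_Un_disjoint)
  then have "slp_extends N B \<Gamma> \<Gamma>4 (card (?pos q) + 3 * Suc Q)"
    by (intro slp_extends_mono[OF \<Gamma>4(1)]) simp
  moreover have "(\<Sum>i\<in>?pos q. h i) \<in> computed \<Gamma>4"
    using \<Gamma>3(3) \<Gamma>4(2) T by auto
  moreover have "(\<Sum>i\<in>I. of_nat (q i) * h i) \<in> computed \<Gamma>4"
    using \<Gamma>4(3) sum_of_nat_mult_eq_pred_plus[OF assms(1), of q h] by simp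
  ultimately show ?case by (blast intro: available_member)
qed

lemma slp_extends_nat_comb:
  assumes "finite I" and "slp_ok N B \<Gamma>" and "0 \<le> B"
    and "\<And>i. i \<in> I \<Longrightarrow> available N B (computed \<Gamma>) (h i)"
    and "\<And>i. i \<in> I \<Longrightarrow> q i \<le> Q"
  shows "\<exists>\<Gamma>'. slp_extends N B \<Gamma> \<Gamma>' (card I + 3 * Q) \<and>
           available N B (computed \<Gamma>') (\<Sum>i\<in>I. of_nat (q i) * h i)"
proof -
  obtain \<Gamma>' where \<Gamma>': "slp_extends N B \<Gamma> \<Gamma>' (card {i\<in>I. 1 \<le> q i} + 3 * Q)"
    "available N B (computed \<Gamma>') (\<Sum>i\<in>I. of_nat (q i) * h i)"
    using slp_extends_nat_comb_and_support_sum[OF assms(1-3), of h q Q] assms(4,5) by blast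
  have "card {i\<in>I. 1 \<le> q i} \<le> card I"
    using assms(1) by (intro card_mono) auto
  then have "slp_extends N B \<Gamma> \<Gamma>' (card I + 3 * Q)"
    by (intro slp_extends_mono[OF \<Gamma>'(1)]) simp
  with \<Gamma>'(2) show ?thesis by blast
qed

lemma slp_extends_small_int_comb:
  assumes "finite I" and "slp_ok N B \<Gamma>" and "0 \<le> B"
    and "\<And>i. i \<in> I \<Longrightarrow> available N B (computed \<Gamma>) (h i)"
    and "\<And>i. i \<in> I \<Longrightarrow> \<bar>q i\<bar> \<le> int Q"
  shows "\<exists>\<Gamma>'. slp_extends N B \<Gamma> \<Gamma>' (2 * card I + 6 * Q + 1) \<and>
           (\<Sum>i\<in>I. of_int (q i) * h i) \<in> computed \<Gamma>'"
proof -
  let ?P = "\<Sum>i\<in>I. of_nat (nat (q i)) * h i" and ?M = "\<Sum>i\<in>I. of_nat (nat (- q i)) * h i"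
  obtain \<Gamma>1 where \<Gamma>1: "slp_extends N B \<Gamma> \<Gamma>1 (card I + 3 * Q)" "available N B (computed \<Gamma>1) ?P"
    using slp_extends_nat_comb[OF assms(1-3), of h "\<lambda>i. nat (q i)" Q] assms(4,5) by fastforce
  obtain \<Gamma>2 where \<Gamma>2: "slp_extends N B \<Gamma>1 \<Gamma>2 (card I + 3 * Q)" "available N B (computed \<Gamma>2) ?M"
    using slp_extends_nat_comb[OF assms(1) slp_extends_ok[OF \<Gamma>1(1)] assms(3), of h "\<lambda>i. nat (- q i)" Q]
      assms(4,5) slp_extends_computed[OF \<Gamma>1(1)] available_mono by fastforce
  obtain \<Gamma>3 where \<Gamma>3: "slp_extends N B \<Gamma> \<Gamma>3 (card I + 3 * Q + (card I + 3 * Q) + 1)" "?P - ?M \<in> computed \<Gamma>3"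
    using slp_extends_op_after[OF slp_extends_trans[OF \<Gamma>1(1) \<Gamma>2(1)] _ \<Gamma>2(2), of ?P OSub]
      \<Gamma>1(2) slp_extends_computed[OF \<Gamma>2(1)] available_mono by auto
  have "of_nat (nat (q i)) * h i - of_nat (nat (- q i)) * h i = of_int (q i) * h i" for i
    by (cases "0 \<le> q i") (simp_all add: algebra_simps)
  then have "?P - ?M = (\<Sum>i\<in>I. of_int (q i) * h i)"
    by (simp only: sum_subtractf[symmetric])
  moreover have "slp_extends N B \<Gamma> \<Gamma>3 (2 * card I + 6 * Q + 1)"
    by (rule slp_extends_mono[OF \<Gamma>3(1)]) simp
  ultimately show ?thesis
    using \<Gamma>3(2) by auto
qed

lemma abs_div_le_of_abs_le_mult:
  fixes w K :: int
  assumes "1 \<le> K" and "\<bar>w\<bar> \<le> int Q * K"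
  shows "\<bar>w div K\<bar> \<le> int Q"
proof -
  have "- int Q * K \<le> w" "w \<le> int Q * K"
    using assms(2) by auto
  then have "w div K \<le> (int Q * K) div K" "(- int Q * K) div K \<le> w div K"
    using assms(1) by (intro zdiv_mono1; simp)+
  moreover have "(int Q * K) div K = int Q" "(- int Q * K) div K = - int Q"
    using assms(1) by (simp, metis nonzero_mult_div_cancel_right not_one_le_zero)
  ultimately show ?thesis by simp
qed

lemma ht_mod_le: "1 \<le> K \<Longrightarrow> ht (w mod K) \<le> ht K"
  by (rule ht_mono) (simp_all add: less_imp_le)

text \<open>Writing \<open>w i = K * (w i div K) + w i mod K\<close> keeps every constant below \<open>K\<close>.\<close>
lemma slp_extends_int_comb:
  assumes "finite I" and "slp_ok N B \<Gamma>" and "0 \<le> B"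
    and "\<And>i. i \<in> I \<Longrightarrow> available N B (computed \<Gamma>) (h i)"
    and "1 \<le> K" and "ht K \<le> B"
    and "\<And>i. i \<in> I \<Longrightarrow> \<bar>w i\<bar> \<le> int Q * K"
  shows "\<exists>\<Gamma>'. slp_extends N B \<Gamma> \<Gamma>' (4 * card I + 6 * Q + 4) \<and>
           (\<Sum>i\<in>I. of_int (w i) * h i) \<in> computed \<Gamma>'"
proof -
  let ?D = "\<Sum>i\<in>I. of_int (w i div K) * h i" and ?R = "\<Sum>i\<in>I. of_int (w i mod K) * h i"
  obtain \<Gamma>1 where \<Gamma>1: "slp_extends N B \<Gamma> \<Gamma>1 (2 * card I + 6 * Q + 1)" "?D \<in> computed \<Gamma>1"
    using slp_extends_small_int_comb[OF assms(1-3), of h "\<lambda>i. w i div K" Q] assms(4)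
      abs_div_le_of_abs_le_mult[OF assms(5,7)] by blast
  obtain \<Gamma>2 where \<Gamma>2: "slp_extends N B \<Gamma> \<Gamma>2 (2 * card I + 6 * Q + 1 + 1)"
    "computed \<Gamma>1 \<subseteq> computed \<Gamma>2" "of_int K * ?D \<in> computed \<Gamma>2"
    using slp_extends_op_after[OF \<Gamma>1(1) available_of_int[OF assms(6)] available_member[OF \<Gamma>1(2)],
      of OMul] by auto
  have "\<And>i. i \<in> I \<Longrightarrow> available N B (computed \<Gamma>2) (h i)"
    using assms(4) slp_extends_computed[OF \<Gamma>2(1)] available_mono by blast
  then obtain \<Gamma>3 where \<Gamma>3: "slp_extends N B \<Gamma>2 \<Gamma>3 (2 * card I + 1)" "?R \<in> computed \<Gamma>3"
    using slp_extends_sum_products[OF assms(1) slp_extends_ok[OF \<Gamma>2(1)] assms(3), of "\<lambda>i. of_int (w i mod K)" h]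
      available_of_int ht_mod_le[OF assms(5)] assms(6) order_trans by blast
  have "available N B (computed \<Gamma>3) (of_int K * ?D)"
    using \<Gamma>2(3) slp_extends_computed[OF \<Gamma>3(1)] by (blast intro: available_member)
  then obtain \<Gamma>4 where \<Gamma>4: "slp_extends N B \<Gamma> \<Gamma>4 (2 * card I + 6 * Q + 1 + 1 + (2 * card I + 1) + 1)"
    "of_int K * ?D + ?R \<in> computed \<Gamma>4"
    using slp_extends_op_after[OF slp_extends_trans[OF \<Gamma>2(1) \<Gamma>3(1)] _ available_member[OF \<Gamma>3(2)],
      of "of_int K * ?D" OAdd] by auto
  have "(of_int (w i) :: mpoly) = of_int K * of_int (w i div K) + of_int (w i mod K)" for i
    by (simp flip: of_int_mult of_int_add)
  then have "of_int K * ?D + ?R = (\<Sum>i\<in>I. of_int (w i) * h i)"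
    by (simp add: sum_distrib_left sum.distrib[symmetric] algebra_simps)
  moreover have "slp_extends N B \<Gamma> \<Gamma>4 (4 * card I + 6 * Q + 4)"
    by (rule slp_extends_mono[OF \<Gamma>4(1)]) simp
  ultimately show ?thesis
    using \<Gamma>4(2) by auto
qed

lemma slp_extends_multiples:
  assumes "slp_ok N B \<Gamma>" and "0 \<le> B" and "available N B (computed \<Gamma>) h"
  shows "\<exists>\<Gamma>'. slp_extends N B \<Gamma> \<Gamma>' (2 * Q + 1) \<and> (\<forall>v. \<bar>v\<bar> \<le> int Q \<longrightarrow> of_int v * h \<in> computed \<Gamma>')"
proof (induction Q)
  case 0
  show ?case
    using slp_extends_op[OF assms(1) available_0[OF assms(2)] assms(3), of OMul] by auto
next
  case (Suc Q)
  then obtain \<Gamma>1 where \<Gamma>1: "slp_extends N B \<Gamma> \<Gamma>1 (2 * Q + 1)"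
    "\<forall>v. \<bar>v\<bar> \<le> int Q \<longrightarrow> of_int v * h \<in> computed \<Gamma>1" by blast
  have h1: "available N B (computed \<Gamma>1) h"
    using assms(3) slp_extends_computed[OF \<Gamma>1(1)] available_mono by blast
  have m: "of_int (int Q) * h \<in> computed \<Gamma>1" "of_int (- int Q) * h \<in> computed \<Gamma>1"
    using \<Gamma>1(2)[rule_format, of "int Q"] \<Gamma>1(2)[rule_format, of "- int Q"] by simp_all
  obtain \<Gamma>2 where \<Gamma>2: "slp_extends N B \<Gamma> \<Gamma>2 (2 * Q + 1 + 1)" "computed \<Gamma>1 \<subseteq> computed \<Gamma>2"
    "of_int (int Q) * h + h \<in> computed \<Gamma>2"
    using slp_extends_op_after[OF \<Gamma>1(1) available_member[OF m(1)] h1, of OAdd] by auto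
  have "available N B (computed \<Gamma>2) (of_int (- int Q) * h)" "available N B (computed \<Gamma>2) h"
    using m(2) \<Gamma>2(2) h1 available_mono by (blast intro: available_member)+
  then obtain \<Gamma>3 where \<Gamma>3: "slp_extends N B \<Gamma> \<Gamma>3 (2 * Suc Q + 1)" "computed \<Gamma>2 \<subseteq> computed \<Gamma>3"
    "of_int (- int Q) * h - h \<in> computed \<Gamma>3"
    using slp_extends_op_after[OF \<Gamma>2(1), of _ _ OSub] by fastforce
  have "of_int v * h \<in> computed \<Gamma>3" if "\<bar>v\<bar> \<le> int (Suc Q)" for v
  proof -
    have "\<bar>v\<bar> \<le> int Q \<or> v = int Q + 1 \<or> v = - int Q - 1"
      using that by linarith
    then show ?thesis
    proof (elim disjE)
      assume "\<bar>v\<bar> \<le> int Q"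
      then show ?thesis using \<Gamma>1(2) \<Gamma>2(2) \<Gamma>3(2) by blast
    next
      assume "v = int Q + 1"
      then have "of_int v * h = of_int (int Q) * h + h" by (simp add: algebra_simps)
      then show ?thesis using \<Gamma>2(3) \<Gamma>3(2) by auto
    next
      assume v: "v = - int Q - 1"
      have "of_int v * h = of_int (- int Q) * h - h" unfolding v by (simp add: algebra_simps)
      then show ?thesis using \<Gamma>3(3) by simp
    qed
  qed
  then show ?case using \<Gamma>3(1) by blast
qed

lemma slp_extends_div_mod_mult:
  assumes "slp_ok N B \<Gamma>" and "1 \<le> K" and "ht K \<le> B"
    and "available N B (computed \<Gamma>) h" and "of_int (w div K) * h \<in> computed \<Gamma>"
  shows "\<exists>\<Gamma>'. slp_extends N B \<Gamma> \<Gamma>' 3 \<and> of_int w * h \<in> computed \<Gamma>'"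
proof -
  obtain \<Gamma>1 where \<Gamma>1: "slp_extends N B \<Gamma> \<Gamma>1 1" "of_int K * (of_int (w div K) * h) \<in> computed \<Gamma>1"
    using slp_extends_op[OF assms(1) available_of_int[OF assms(3)] available_member[OF assms(5)], of OMul]
    by auto
  have "ht (w mod K) \<le> B"
    using ht_mod_le[OF assms(2)] assms(3) by (rule order_trans)
  then obtain \<Gamma>2 where \<Gamma>2: "slp_extends N B \<Gamma> \<Gamma>2 (1 + 1)" "computed \<Gamma>1 \<subseteq> computed \<Gamma>2"
    "of_int (w mod K) * h \<in> computed \<Gamma>2"
    using slp_extends_op_after[OF \<Gamma>1(1) available_of_int slp_extends_available[OF \<Gamma>1(1) assms(4)], of _ OMul]
    by auto
  have "of_int K * (of_int (w div K) * h) \<in> computed \<Gamma>2"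
    using \<Gamma>1(2) \<Gamma>2(2) by blast
  then obtain \<Gamma>3 where "slp_extends N B \<Gamma> \<Gamma>3 3"
    "of_int K * (of_int (w div K) * h) + of_int (w mod K) * h \<in> computed \<Gamma>3"
    using slp_extends_op_after[OF \<Gamma>2(1) available_member available_member[OF \<Gamma>2(3)], of _ OAdd]
    by (auto simp: numeral_3_eq_3)
  moreover have "of_int K * (of_int (w div K) * h) + of_int (w mod K) * h = of_int (K * (w div K) + w mod K) * h"
    by (simp only: of_int_add of_int_mult distrib_right mult.assoc)
  ultimately show ?thesis by auto
qed

lemma slp_extends_comb_of_multiples:
  assumes "finite J" and "slp_ok N B \<Gamma>" and "0 \<le> B" and "1 \<le> K" and "ht K \<le> B"
    and "\<And>j. j \<in> J \<Longrightarrow> available N B (computed \<Gamma>) (h j)"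
    and "\<And>j v. j \<in> J \<Longrightarrow> \<bar>v\<bar> \<le> int Q \<Longrightarrow> of_int v * h j \<in> computed \<Gamma>"
    and "\<And>j. j \<in> J \<Longrightarrow> \<bar>w j\<bar> \<le> int Q * K"
  shows "\<exists>\<Gamma>'. slp_extends N B \<Gamma> \<Gamma>' (4 * card J + 1) \<and> (\<Sum>j\<in>J. of_int (w j) * h j) \<in> computed \<Gamma>'"
proof -
  have "\<exists>\<Gamma>1. slp_extends N B \<Gamma> \<Gamma>1 (\<Sum>j\<in>J. 3) \<and> (\<forall>j\<in>J. of_int (w j) * h j \<in> computed \<Gamma>1)"
  proof (rule slp_extends_each[OF assms(1,2)])
    fix j \<Gamma>1 assume j: "j \<in> J" and \<Gamma>1: "slp_ok N B \<Gamma>1" "computed \<Gamma> \<subseteq> computed \<Gamma>1"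
    have "of_int (w j div K) * h j \<in> computed \<Gamma>1"
      using assms(7)[OF j] abs_div_le_of_abs_le_mult[OF assms(4) assms(8)[OF j]] \<Gamma>1(2) by blast
    then show "\<exists>\<Gamma>2. slp_extends N B \<Gamma>1 \<Gamma>2 3 \<and> of_int (w j) * h j \<in> computed \<Gamma>2"
      by (rule slp_extends_div_mod_mult[OF \<Gamma>1(1) assms(4,5) available_mono[OF assms(6)[OF j] \<Gamma>1(2)]])
  qed
  then obtain \<Gamma>1 where \<Gamma>1: "slp_extends N B \<Gamma> \<Gamma>1 (card J * 3)" "\<forall>j\<in>J. of_int (w j) * h j \<in> computed \<Gamma>1"
    by auto
  then have "\<And>j. j \<in> J \<Longrightarrow> available N B (computed \<Gamma>1) (of_int (w j) * h j)"
    by (simp add: available_member)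
  from slp_extends_sum[where h="\<lambda>j. of_int (w j) * h j", OF assms(1) slp_extends_ok[OF \<Gamma>1(1)] assms(3) this]
  obtain \<Gamma>2 where \<Gamma>2: "slp_extends N B \<Gamma>1 \<Gamma>2 (card J + 1)" "(\<Sum>j\<in>J. of_int (w j) * h j) \<in> computed \<Gamma>2"
    by blast
  have "slp_extends N B \<Gamma> \<Gamma>2 (4 * card J + 1)"
    by (rule slp_extends_mono[OF slp_extends_trans[OF \<Gamma>1(1) \<Gamma>2(1)]]) simp
  with \<Gamma>2(2) show ?thesis by blast
qed

section \<open>Formal partial derivatives\<close>

declare One_nat_def [simp del]

abbreviation \<delta> :: "nat \<Rightarrow> nat \<Rightarrow>\<^sub>0 nat" where
  "\<delta> i \<equiv> Poly_Mapping.single i 1"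

lemma minus_delta_plus_delta: "lookup a k \<noteq> 0 \<Longrightarrow> a - \<delta> k + \<delta> k = a"
  by (rule poly_mapping_eqI) (auto simp: lookup_add lookup_minus lookup_single when_def)

lemma minus_delta_eq_iff: "lookup a k \<noteq> 0 \<Longrightarrow> a - \<delta> k = m \<longleftrightarrow> a = m + \<delta> k"
  by (metis add_diff_cancel_right' minus_delta_plus_delta)

lemma lookup_mpderiv:
  "lookup (mpderiv k f) m = of_nat (lookup m k + 1) * lookup f (m + \<delta> k)"
proof -
  have summand: "(of_nat (lookup m' k) * lookup f m' when m' - \<delta> k = m) =
        (if m' = m + \<delta> k then of_nat (lookup m k + 1) * lookup f m' else 0)" for m'
  proof (cases "lookup m' k = 0")
    case True
    then have "m' \<noteq> m + \<delta> k" by (auto simp: lookup_add)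
    then show ?thesis using True by simp
  next
    case False
    then show ?thesis by (auto simp: minus_delta_eq_iff lookup_add)
  qed
  have "lookup (mpderiv k f) m = (\<Sum>m'\<in>keys f. of_nat (lookup m' k) * lookup f m' when m' - \<delta> k = m)"
    by (simp add: mpderiv_def lookup_sum lookup_single)
  also have "\<dots> = (\<Sum>m'\<in>keys f. if m' = m + \<delta> k then of_nat (lookup m k + 1) * lookup f m' else 0)"
    by (intro sum.cong refl summand)
  also have "\<dots> = of_nat (lookup m k + 1) * lookup f (m + \<delta> k)"
    by (simp add: in_keys_iff)
  finally show ?thesis .
qed

lemma mpderiv_add: "mpderiv k (f + g) = mpderiv k f + mpderiv k g"
  by (rule poly_mapping_eqI) (simp add: lookup_mpderiv lookup_add algebra_simps)

lemma mpderiv_diff: "mpderiv k (f - g) = mpderiv k f - mpderiv k g"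
  by (rule poly_mapping_eqI) (simp add: lookup_mpderiv lookup_minus algebra_simps)

lemma mpderiv_0 [simp]: "mpderiv k 0 = 0"
  by (rule poly_mapping_eqI) (simp add: lookup_mpderiv)

lemma mpderiv_sum: "mpderiv k (\<Sum>i\<in>I. g i) = (\<Sum>i\<in>I. mpderiv k (g i))"
  by (induction I rule: infinite_finite_induct) (auto simp: mpderiv_add)

lemma mpderiv_single:
  "mpderiv k (Poly_Mapping.single a c) = Poly_Mapping.single (a - \<delta> k) (of_nat (lookup a k) * c)"
proof (rule poly_mapping_eqI)
  fix m
  show "lookup (mpderiv k (Poly_Mapping.single a c)) m =
        lookup (Poly_Mapping.single (a - \<delta> k) (of_nat (lookup a k) * c)) m"
  proof (cases "a = m + \<delta> k")
    case True
    then have "a - \<delta> k = m" "lookup a k = lookup m k + 1"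
      by (simp_all add: lookup_add)
    then show ?thesis using True by (simp add: lookup_mpderiv)
  next
    case False
    then have "\<not> (a - \<delta> k = m \<and> lookup a k \<noteq> 0)"
      using minus_delta_eq_iff by blast
    then show ?thesis using False
      by (auto simp: lookup_mpderiv lookup_single when_def)
  qed
qed

lemma mpderiv_of_int [simp]: "mpderiv k (of_int c) = 0"
  by (simp add: mpderiv_single flip: single_of_int)

lemma mpderiv_1 [simp]: "mpderiv k 1 = 0"
  using mpderiv_of_int[of k 1] by simp

lemma mpderiv_mVar: "mpderiv k (mVar j) = (if j = k then 1 else 0)"
  by (simp add: mVar_def mpderiv_single lookup_single when_def)

lemma mpderiv_mult_single:
  "mpderiv k (Poly_Mapping.single a 1 * Poly_Mapping.single b 1) =
   mpderiv k (Poly_Mapping.single a 1) * Poly_Mapping.single b 1 +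
   Poly_Mapping.single a 1 * mpderiv k (Poly_Mapping.single b (1::int))"
proof -
  have shift: "Poly_Mapping.single (a' - \<delta> k + b') (int (lookup a' k)) =
               Poly_Mapping.single (a' + b' - \<delta> k) (int (lookup a' k))" for a' b'
  proof (cases "lookup a' k = 0")
    case False
    then have "a' - \<delta> k + b' = a' + b' - \<delta> k"
      by (intro poly_mapping_eqI) (auto simp: lookup_add lookup_minus lookup_single when_def)
    then show ?thesis by simp
  qed simp
  have "mpderiv k (Poly_Mapping.single a 1 * Poly_Mapping.single b 1) =
        Poly_Mapping.single (a + b - \<delta> k) (int (lookup a k)) +
        Poly_Mapping.single (a + b - \<delta> k) (int (lookup b k))"
    by (simp only: mult_single mpderiv_single lookup_add mult_1 of_nat_add mult_1_right single_add)
  also have "\<dots> = mpderiv k (Poly_Mapping.single a 1) * Poly_Mapping.single b 1 +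
                   Poly_Mapping.single a 1 * mpderiv k (Poly_Mapping.single b (1::int))"
    using shift[of a b] shift[of b a]
    by (simp only: mpderiv_single mult_single mult_1_right mult_1 add.commute[of a b]
        add.commute[of "b - \<delta> k" a])
  finally show ?thesis .
qed

lemma mpderiv_mult: "mpderiv k (f * g) = mpderiv k f * g + f * mpderiv k g"
proof -
  have "\<forall>g. mpderiv k (f * g) = mpderiv k f * g + f * mpderiv k g"
    using subset_UNIV
  proof (induction f rule: frag_induction)
    case (one x)
    show ?case
    proof
      fix g :: mpoly
      show "mpderiv k (frag_of x * g) = mpderiv k (frag_of x) * g + frag_of x * mpderiv k g"
        using subset_UNIV
      proof (induction g rule: frag_induction)
        case (one y)
        show ?case by (rule mpderiv_mult_single)
      qed (simp_all add: mpderiv_diff algebra_simps)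
    qed
  qed (simp_all add: mpderiv_diff algebra_simps)
  then show ?thesis by blast
qed

lemma mpderiv_prod:
  "finite I \<Longrightarrow> mpderiv k (\<Prod>i\<in>I. g i) = (\<Sum>i\<in>I. mpderiv k (g i) * (\<Prod>j\<in>I - {i}. g j))"
proof (induction I rule: finite_induct)
  case (insert x F)
  have "(\<Prod>j\<in>insert x F - {i}. g j) = g x * (\<Prod>j\<in>F - {i}. g j)" if "i \<in> F" for i
  proof -
    have "insert x F - {i} = insert x (F - {i})"
      using that insert.hyps(2) by auto
    then show ?thesis using insert.hyps by simp
  qed
  then have "g x * mpderiv k (\<Prod>i\<in>F. g i) = (\<Sum>i\<in>F. mpderiv k (g i) * (\<Prod>j\<in>insert x F - {i}. g j))"
    by (simp add: insert.IH sum_distrib_left mult_ac)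
  moreover have "(\<Prod>j\<in>insert x F - {x}. g j) = (\<Prod>i\<in>F. g i)"
    using insert.hyps(2) by simp
  ultimately show ?case
    using insert.hyps by (simp add: mpderiv_mult)
qed simp

lemma mpderiv_power: "mpderiv k (g ^ e) = of_nat e * g ^ (e - 1) * mpderiv k g"
  by (induction e) (simp_all add: mpderiv_mult algebra_simps power_eq_if)

section \<open>Monomials of bounded degree\<close>

definition eval_monom :: "(nat \<Rightarrow> 'a::comm_semiring_1) \<Rightarrow> nat \<Rightarrow> (nat \<Rightarrow>\<^sub>0 nat) \<Rightarrow> 'a" where
  "eval_monom y n m = (\<Prod>i<n. y i ^ lookup m i)"

lemma eval_monom_0 [simp]: "eval_monom y n 0 = 1"
  by (simp add: eval_monom_def)

lemma eval_monom_add: "eval_monom y n (a + b) = eval_monom y n a * eval_monom y n b"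
  by (simp add: eval_monom_def lookup_add power_add prod.distrib)

lemma eval_monom_delta: "i < n \<Longrightarrow> eval_monom y n (\<delta> i) = y i"
proof -
  have "(\<Prod>j<n. y j ^ lookup (\<delta> i) j) = (\<Prod>j<n. if j = i then y i else 1)"
    by (rule prod.cong) (auto simp: lookup_single)
  then show "i < n \<Longrightarrow> ?thesis" by (simp add: eval_monom_def)
qed

lemma mpderiv_eval_monom:
  "mpderiv k (eval_monom y n m) = (\<Sum>i<n. of_nat (lookup m i) * eval_monom y n (m - \<delta> i) * mpderiv k (y i))"
proof -
  have "y i ^ (lookup m i - 1) * (\<Prod>j\<in>{..<n} - {i}. y j ^ lookup m j) = eval_monom y n (m - \<delta> i)"
    if "i < n" for i
  proof -
    have "(\<Prod>j\<in>{..<n} - {i}. y j ^ lookup m j) = (\<Prod>j\<in>{..<n} - {i}. y j ^ lookup (m - \<delta> i) j)"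
      by (rule prod.cong) (auto simp: lookup_minus lookup_single)
    then show ?thesis
      using that by (simp add: eval_monom_def prod.remove lookup_minus)
  qed
  then show ?thesis
    unfolding eval_monom_def by (auto simp: mpderiv_prod mpderiv_power mult_ac intro!: sum.cong)
qed

lemma mon_deg_eq_sum: "finite S \<Longrightarrow> keys m \<subseteq> S \<Longrightarrow> mon_deg m = (\<Sum>i\<in>S. lookup m i)"
  unfolding mon_deg_def by (rule sum.mono_neutral_left) (auto simp: in_keys_iff)

lemma mon_deg_0 [simp]: "mon_deg 0 = 0"
  by (simp add: mon_deg_def)

lemma mon_deg_add: "mon_deg (a + b) = mon_deg a + mon_deg b"
proof -
  let ?S = "keys a \<union> keys b"
  have "keys (a + b) \<subseteq> ?S"
    by (rule keys_add)
  then show ?thesis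
    by (simp add: mon_deg_eq_sum[of ?S] lookup_add sum.distrib)
qed

lemma mon_deg_single [simp]: "mon_deg (Poly_Mapping.single i e) = e"
  by (simp add: mon_deg_def)

lemma lookup_le_mon_deg: "lookup m i \<le> mon_deg m"
  by (cases "i \<in> keys m") (auto simp: mon_deg_def in_keys_iff intro: member_le_sum)

lemma mon_deg_mono: "(\<And>j. lookup a j \<le> lookup b j) \<Longrightarrow> mon_deg a \<le> mon_deg b"
proof -
  assume le: "\<And>j. lookup a j \<le> lookup b j"
  have "keys a \<subseteq> keys b"
  proof
    fix j assume "j \<in> keys a"
    then show "j \<in> keys b" using le[of j] by (auto simp: in_keys_iff)
  qed
  then show ?thesis
    using le by (simp add: mon_deg_eq_sum[of "keys b"] mon_deg_def[of b] sum_mono)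
qed

lemma mon_deg_eq_0_iff: "mon_deg m = 0 \<longleftrightarrow> m = 0"
  by (auto simp: mon_deg_def in_keys_iff intro: poly_mapping_eqI)

definition monoms :: "nat \<Rightarrow> nat \<Rightarrow> (nat \<Rightarrow>\<^sub>0 nat) set" where
  "monoms n d = {m. keys m \<subseteq> {..<n} \<and> mon_deg m \<le> d}"

lemma zero_in_monoms [simp]: "0 \<in> monoms n d"
  by (simp add: monoms_def)

lemma monoms_mono: "d' \<le> d \<Longrightarrow> monoms n d' \<subseteq> monoms n d"
  by (auto simp: monoms_def)

lemma monoms_add_delta: "m \<in> monoms n d \<Longrightarrow> i < n \<Longrightarrow> mon_deg m < d \<Longrightarrow> m + \<delta> i \<in> monoms n d"
  using keys_add[of m "\<delta> i"] by (auto simp: monoms_def mon_deg_add)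

lemma monoms_minus_delta: "m \<in> monoms n d \<Longrightarrow> m - \<delta> i \<in> monoms n d"
proof -
  assume m: "m \<in> monoms n d"
  have "keys (m - \<delta> i) \<subseteq> keys m"
    by (auto simp: in_keys_iff lookup_minus)
  moreover have "mon_deg (m - \<delta> i) \<le> mon_deg m"
    by (rule mon_deg_mono) (simp add: lookup_minus)
  ultimately show ?thesis using m by (auto simp: monoms_def)
qed

lemma monoms_Suc:
  "monoms (Suc n) d = (\<lambda>(e, m). m + Poly_Mapping.single n e) ` (SIGMA e:{..d}. monoms n (d - e))"
proof (rule Set.set_eqI, rule iffI)
  fix m assume m: "m \<in> monoms (Suc n) d"
  define e where "e = lookup m n"
  define m' where "m' = m - Poly_Mapping.single n e"
  have eq: "m = m' + Poly_Mapping.single n e"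
    by (rule poly_mapping_eqI) (auto simp: m'_def e_def lookup_add lookup_minus lookup_single when_def)
  have "keys m' \<subseteq> {..<n}"
    using m by (auto simp: monoms_def m'_def e_def in_keys_iff lookup_minus lookup_single less_Suc_eq
        subset_iff when_def split: if_splits)
  moreover have "mon_deg m = mon_deg m' + e"
    by (subst eq) (simp add: mon_deg_add)
  ultimately show "m \<in> (\<lambda>(e, m). m + Poly_Mapping.single n e) ` (SIGMA e:{..d}. monoms n (d - e))"
    using m eq by (auto simp: monoms_def intro!: image_eqI[of _ _ "(e, m')"])
next
  fix m assume "m \<in> (\<lambda>(e, m). m + Poly_Mapping.single n e) ` (SIGMA e:{..d}. monoms n (d - e))"
  then obtain e m' where m: "m = m' + Poly_Mapping.single n e" "e \<le> d" "keys m' \<subseteq> {..<n}"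
    "mon_deg m' \<le> d - e"
    by (auto simp: monoms_def)
  then show "m \<in> monoms (Suc n) d"
    using keys_add[of m' "Poly_Mapping.single n e"] by (auto simp: monoms_def mon_deg_add split: if_splits)
qed

lemma inj_on_monoms_Suc:
  "inj_on (\<lambda>(e, m). m + Poly_Mapping.single n e) (SIGMA e:{..d}. monoms n (d - e))"
proof (rule inj_onI, clarsimp)
  fix e m e' m'
  assume "m \<in> monoms n (d - e)" "m' \<in> monoms n (d - e')"
    and eq: "m + Poly_Mapping.single n e = m' + Poly_Mapping.single n e'"
  then have "lookup m n = 0" "lookup m' n = 0"
    by (auto simp: monoms_def in_keys_iff)
  then have "e = e'"
    using arg_cong[OF eq, of "\<lambda>q. lookup q n"] by (simp add: lookup_add)
  then show "e = e' \<and> m = m'"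
    using eq by simp
qed

lemma finite_monoms_card_monoms: "finite (monoms n d) \<and> card (monoms n d) = (n + d) choose d"
proof (induction n arbitrary: d)
  case 0
  have "monoms 0 d = {0}"
    by (auto simp: monoms_def)
  then show ?case by simp
next
  case (Suc n)
  have "card (monoms (Suc n) d) = card (SIGMA e:{..d}. monoms n (d - e))"
    unfolding monoms_Suc by (rule card_image[OF inj_on_monoms_Suc])
  also have "\<dots> = (\<Sum>e\<le>d. (n + (d - e)) choose (d - e))"
    using Suc by simp
  also have "\<dots> = (\<Sum>k\<le>d. (n + k) choose k)"
    by (rule sum.reindex_bij_witness[where i="\<lambda>k. d - k" and j="\<lambda>k. d - k"]) auto
  also have "\<dots> = (Suc n + d) choose d"
    by (simp add: sum_choose_lower)
  finally show ?case
    using Suc by (simp add: monoms_Suc)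
qed

lemma finite_monoms [simp]: "finite (monoms n d)"
  using finite_monoms_card_monoms by blast

lemma card_monoms: "card (monoms n d) = (n + d) choose d"
  using finite_monoms_card_monoms by blast

lemma card_monoms_pos: "1 \<le> card (monoms n d)"
proof -
  have "monoms n d \<noteq> {}"
    using zero_in_monoms by blast
  then show ?thesis by (simp add: card_gt_0_iff Suc_le_eq One_nat_def)
qed

lemma card_monoms_ge: "1 \<le> d \<Longrightarrow> n \<le> card (monoms n d)"
  using card_mono[OF finite_monoms monoms_mono, of 1 d n] by (simp add: card_monoms choose_one)

lemma square_le_choose_two: "n * n \<le> 2 * ((n + 2) choose 2)"
proof (induction n)
  case (Suc n)
  have "(Suc n + 2) choose 2 = (n + 2) + ((n + 2) choose 2)"
    by (simp add: numeral_2_eq_2)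
  then show ?case using Suc.IH by simp
qed simp

lemma square_le_card_monoms: "2 \<le> d \<Longrightarrow> n * n \<le> 2 * card (monoms n d)"
  using card_mono[OF finite_monoms monoms_mono, of 2 d n] square_le_choose_two[of n]
  by (simp add: card_monoms)

lemma monoms_1: "monoms n 1 = insert 0 (\<delta> ` {..<n})"
proof (rule Set.set_eqI, rule iffI)
  fix m assume m: "m \<in> monoms n 1"
  show "m \<in> insert 0 (\<delta> ` {..<n})"
  proof (cases "m = 0")
    case False
    then obtain i where i: "i \<in> keys m"
      by fastforce
    then have "i < n" "lookup m i \<noteq> 0"
      using m by (auto simp: monoms_def, simp add: in_keys_iff)
    then have "mon_deg (m - \<delta> i) + 1 = mon_deg m"
      by (metis minus_delta_plus_delta mon_deg_add mon_deg_single)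
    then have "mon_deg (m - \<delta> i) = 0"
      using m by (simp add: monoms_def)
    then have "m - \<delta> i = 0"
      by (simp add: mon_deg_eq_0_iff)
    then have "m = \<delta> i"
      using minus_delta_plus_delta[OF \<open>lookup m i \<noteq> 0\<close>] by simp
    then show ?thesis using \<open>i < n\<close> by auto
  qed simp
qed (auto simp: monoms_def)

section \<open>The Horner scheme and its gradient\<close>

definition top_var :: "(nat \<Rightarrow>\<^sub>0 nat) \<Rightarrow> nat" where
  "top_var m = (if m = 0 then 0 else Max (keys m))"

lemma top_var_in_keys: "m \<noteq> 0 \<Longrightarrow> top_var m \<in> keys m"
  by (simp add: top_var_def)

lemma le_top_var: "j \<in> keys m \<Longrightarrow> j \<le> top_var m"
  by (auto simp: top_var_def)

lemma add_delta_neq_0: "m + \<delta> i \<noteq> 0"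
  by (metis lookup_add lookup_single_eq lookup_zero add_is_0 one_neq_zero)

lemma keys_add_nat: "keys (a + b) = keys a \<union> keys (b :: nat \<Rightarrow>\<^sub>0 nat)"
  by (auto simp: in_keys_iff lookup_add)

lemma top_var_add_delta: "top_var m \<le> i \<Longrightarrow> top_var (m + \<delta> i) = i"
proof -
  assume "top_var m \<le> i"
  then have "Max (insert i (keys m)) = i"
    by (intro Max_eqI) (auto intro: order_trans[OF le_top_var])
  then show ?thesis
    using add_delta_neq_0[of m i] by (simp add: top_var_def keys_add_nat)
qed

lemma top_var_monom:
  assumes "m \<in> monoms n d" and "m \<noteq> 0"
  shows "top_var m < n" and "lookup m (top_var m) \<noteq> 0"
proof -
  show "top_var m < n"
    using top_var_in_keys[OF assms(2)] assms(1) by (auto simp: monoms_def)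
  show "lookup m (top_var m) \<noteq> 0"
    using top_var_in_keys[OF assms(2)] by (simp add: in_keys_iff)
qed

text \<open>Every monomial of degree at most \<open>d\<close> is reached from \<open>0\<close> along exactly one chain
  \<open>0, \<delta> i\<^sub>1, \<delta> i\<^sub>1 + \<delta> i\<^sub>2, \<dots>\<close> with \<open>i\<^sub>1 \<le> i\<^sub>2 \<le> \<dots>\<close>; \<open>horner n d \<gamma> y m\<close> collects the terms
  below \<open>m\<close> in this tree, which gives the recursion \<open>horner_rec\<close>.\<close>
definition horner_tails :: "nat \<Rightarrow> nat \<Rightarrow> (nat \<Rightarrow>\<^sub>0 nat) \<Rightarrow> (nat \<Rightarrow>\<^sub>0 nat) set" where
  "horner_tails n d m = {r. keys r \<subseteq> {top_var m..<n} \<and> mon_deg (m + r) \<le> d}"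

definition horner_children :: "nat \<Rightarrow> nat \<Rightarrow> (nat \<Rightarrow>\<^sub>0 nat) \<Rightarrow> nat set" where
  "horner_children n d m = (if mon_deg m < d then {top_var m..<n} else {})"

definition horner ::
  "nat \<Rightarrow> nat \<Rightarrow> ((nat \<Rightarrow>\<^sub>0 nat) \<Rightarrow> 'a) \<Rightarrow> (nat \<Rightarrow> 'a::comm_ring_1) \<Rightarrow> (nat \<Rightarrow>\<^sub>0 nat) \<Rightarrow> 'a" where
  "horner n d \<gamma> y m = (\<Sum>r\<in>horner_tails n d m. \<gamma> (m + r) * eval_monom y n r)"

lemma horner_tails_subset: "horner_tails n d m \<subseteq> monoms n d"
  by (auto simp: horner_tails_def monoms_def mon_deg_add)

lemma finite_horner_tails [simp]: "finite (horner_tails n d m)"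
  by (rule finite_subset[OF horner_tails_subset finite_monoms])

lemma finite_horner_children [simp]: "finite (horner_children n d m)"
  by (simp add: horner_children_def)

lemma horner_childrenD: "i \<in> horner_children n d m \<Longrightarrow> top_var m \<le> i \<and> i < n \<and> mon_deg m < d"
  by (auto simp: horner_children_def split: if_splits)

lemma horner_tails_eq:
  assumes "m \<in> monoms n d"
  shows "horner_tails n d m =
           insert 0 (\<Union>i\<in>horner_children n d m. (\<lambda>r. \<delta> i + r) ` horner_tails n d (m + \<delta> i))"
proof (rule Set.set_eqI, rule iffI)
  fix r assume r: "r \<in> horner_tails n d m"
  show "r \<in> insert 0 (\<Union>i\<in>horner_children n d m. (\<lambda>r. \<delta> i + r) ` horner_tails n d (m + \<delta> i))"
  proof (cases "r = 0")
    case False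
    define i where "i = Min (keys r)"
    have i: "i \<in> keys r" "\<And>j. j \<in> keys r \<Longrightarrow> i \<le> j"
      using False by (simp_all add: i_def)
    have rk: "keys r \<subseteq> {top_var m..<n}" "mon_deg (m + r) \<le> d"
      using r by (auto simp: horner_tails_def)
    have "1 \<le> lookup r i"
      using i(1) by (simp add: in_keys_iff)
    then have "mon_deg m < d"
      using lookup_le_mon_deg[of r i] rk(2) by (simp add: mon_deg_add)
    then have child: "i \<in> horner_children n d m"
      using i(1) rk(1) by (auto simp: horner_children_def)
    have r_eq: "r = \<delta> i + (r - \<delta> i)"
      using minus_delta_plus_delta[of r i] \<open>1 \<le> lookup r i\<close> by (simp add: add.commute)
    have "keys (r - \<delta> i) \<subseteq> keys r"
      by (auto simp: in_keys_iff lookup_minus)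
    then have "keys (r - \<delta> i) \<subseteq> {top_var (m + \<delta> i)..<n}"
      using top_var_add_delta[of m i] i rk(1) by fastforce
    moreover have "mon_deg (m + \<delta> i + (r - \<delta> i)) \<le> d"
      using rk(2) r_eq by (metis add.assoc)
    ultimately have "r - \<delta> i \<in> horner_tails n d (m + \<delta> i)"
      by (simp add: horner_tails_def)
    then show ?thesis using child r_eq by blast
  qed simp
next
  fix r assume "r \<in> insert 0 (\<Union>i\<in>horner_children n d m. (\<lambda>r. \<delta> i + r) ` horner_tails n d (m + \<delta> i))"
  then show "r \<in> horner_tails n d m"
  proof (elim insertE UN_E imageE)
    fix i r' assume i: "i \<in> horner_children n d m" and r': "r' \<in> horner_tails n d (m + \<delta> i)"
      and "r = \<delta> i + r'"
    then show ?thesis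
      using horner_childrenD[OF i] top_var_add_delta[of m i]
      by (auto simp: horner_tails_def keys_add_nat add.assoc)
  qed (use assms in \<open>simp add: horner_tails_def monoms_def\<close>)
qed

lemma horner_rec:
  assumes "m \<in> monoms n d"
  shows "horner n d \<gamma> y m = \<gamma> m + (\<Sum>i\<in>horner_children n d m. y i * horner n d \<gamma> y (m + \<delta> i))"
proof -
  let ?F = "\<lambda>r. \<gamma> (m + r) * eval_monom y n r"
  let ?A = "\<lambda>i. (\<lambda>r. \<delta> i + r) ` horner_tails n d (m + \<delta> i)"
  have disjoint: "?A i \<inter> ?A j = {}"
    if "i \<in> horner_children n d m" "j \<in> horner_children n d m" "i < j" for i j
  proof -
    have "keys r \<subseteq> {j..<n}" if "r \<in> horner_tails n d (m + \<delta> j)" for r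
      using that horner_childrenD[OF \<open>j \<in> _\<close>] top_var_add_delta[of m j]
      by (auto simp: horner_tails_def)
    then have "lookup r' i = 0" if "r' \<in> ?A j" for r'
      using that \<open>i < j\<close> by (force simp: lookup_add lookup_single in_keys_iff)
    moreover have "lookup r' i \<noteq> 0" if "r' \<in> ?A i" for r'
      using that by (auto simp: lookup_add)
    ultimately show ?thesis by blast
  qed
  have pairwise: "\<forall>i\<in>horner_children n d m. \<forall>j\<in>horner_children n d m. i \<noteq> j \<longrightarrow> ?A i \<inter> ?A j = {}"
    using disjoint by (metis Int_commute linorder_neqE_nat)
  have "horner n d \<gamma> y m = ?F 0 + sum ?F (\<Union>i\<in>horner_children n d m. ?A i)"
    unfolding horner_def horner_tails_eq[OF assms]
    by (subst sum.insert) (auto simp: add_delta_neq_0 add.commute)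
  also have "sum ?F (\<Union>i\<in>horner_children n d m. ?A i) = (\<Sum>i\<in>horner_children n d m. sum ?F (?A i))"
    using pairwise by (intro sum.UNION_disjoint) simp_all
  also have "\<dots> = (\<Sum>i\<in>horner_children n d m. y i * horner n d \<gamma> y (m + \<delta> i))"
  proof (rule sum.cong[OF refl])
    fix i assume "i \<in> horner_children n d m"
    then have "i < n" by (simp add: horner_childrenD)
    have "sum ?F (?A i) = (\<Sum>r\<in>horner_tails n d (m + \<delta> i). ?F (\<delta> i + r))"
      by (rule sum.reindex[unfolded comp_def]) (simp add: inj_on_def)
    also have "\<dots> = y i * horner n d \<gamma> y (m + \<delta> i)"
      by (simp add: horner_def sum_distrib_left eval_monom_add eval_monom_delta[OF \<open>i < n\<close>]
          add.assoc mult_ac)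
    finally show "sum ?F (?A i) = y i * horner n d \<gamma> y (m + \<delta> i)" .
  qed
  finally show ?thesis by simp
qed

definition top_var_monoms :: "nat \<Rightarrow> nat \<Rightarrow> nat \<Rightarrow> (nat \<Rightarrow>\<^sub>0 nat) set" where
  "top_var_monoms n d i = {m \<in> monoms n d. m \<noteq> 0 \<and> top_var m = i}"

lemma finite_top_var_monoms [simp]: "finite (top_var_monoms n d i)"
  by (rule finite_subset[OF _ finite_monoms[of n d]]) (auto simp: top_var_monoms_def)

definition monom_prefix :: "(nat \<Rightarrow>\<^sub>0 nat) \<Rightarrow> nat \<Rightarrow> nat \<Rightarrow> (nat \<Rightarrow>\<^sub>0 nat)" where
  "monom_prefix m i t = (\<Sum>j<i. Poly_Mapping.single j (lookup m j)) + Poly_Mapping.single i t"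

lemma lookup_monom_prefix:
  "lookup (monom_prefix m i t) k = (if k < i then lookup m k else if k = i then t else 0)"
proof -
  have "lookup (\<Sum>j<i. Poly_Mapping.single j (lookup m j)) k = (if k < i then lookup m k else 0)"
    by (simp add: lookup_sum lookup_single when_def)
  then show ?thesis
    by (simp add: monom_prefix_def lookup_add lookup_single when_def)
qed

lemma add_minus_cancel_le: "(\<And>j. lookup a j \<le> lookup b j) \<Longrightarrow> a + (b - a) = (b :: nat \<Rightarrow>\<^sub>0 nat)"
  by (rule poly_mapping_eqI) (simp add: lookup_add lookup_minus)

text \<open>A splitting \<open>m' = m + r\<close> with \<open>top_var m = i\<close> and \<open>r\<close> a tail of \<open>m\<close> is determined by the
  exponent \<open>1 \<le> t \<le> lookup m' i\<close> of \<open>x\<^sub>i\<close> in \<open>m\<close>.\<close>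
lemma horner_fiber_subset:
  assumes "m \<in> top_var_monoms n d i" and "r \<in> horner_tails n d m"
  shows "\<exists>t\<in>{1..lookup (m + r) i}. m = monom_prefix (m + r) i t"
proof -
  have m: "m \<noteq> 0" "top_var m = i" and rk: "keys r \<subseteq> {i..<n}"
    using assms by (auto simp: top_var_monoms_def horner_tails_def)
  have "m = monom_prefix (m + r) i (lookup m i)"
  proof (rule poly_mapping_eqI)
    fix k
    have "k < i \<Longrightarrow> lookup r k = 0" and "i < k \<Longrightarrow> lookup m k = 0"
      using rk le_top_var[of k m] m by (auto simp: in_keys_iff subset_iff)
    then show "lookup m k = lookup (monom_prefix (m + r) i (lookup m i)) k"
      by (auto simp: lookup_monom_prefix lookup_add)
  qed
  moreover have "1 \<le> lookup m i"
    using top_var_in_keys[OF m(1)] m(2) by (simp add: in_keys_iff)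
  ultimately show ?thesis
    by (intro bexI[of _ "lookup m i"]) (auto simp: lookup_add)
qed

lemma monom_prefix_in_fiber:
  assumes "i < n" and "m' \<in> monoms n d" and "1 \<le> t" and "t \<le> lookup m' i"
  shows "monom_prefix m' i t \<in> top_var_monoms n d i"
    and "m' - monom_prefix m' i t \<in> horner_tails n d (monom_prefix m' i t)"
    and "monom_prefix m' i t + (m' - monom_prefix m' i t) = m'"
proof -
  let ?m = "monom_prefix m' i t"
  have le: "\<And>j. lookup ?m j \<le> lookup m' j"
    using assms(4) by (simp add: lookup_monom_prefix)
  have keys_le: "\<And>j. j \<in> keys ?m \<Longrightarrow> j \<le> i"
    by (auto simp: in_keys_iff lookup_monom_prefix split: if_splits)
  have "i \<in> keys ?m"
    using assms(3) by (simp add: in_keys_iff lookup_monom_prefix)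
  then have nz: "?m \<noteq> 0" and top: "top_var ?m = i"
    using keys_le by (auto simp: top_var_def intro!: Max_eqI)
  have "?m \<in> monoms n d"
    using keys_le assms(1,2) mon_deg_mono[OF le] by (force simp: monoms_def)
  then show "?m \<in> top_var_monoms n d i"
    using nz top by (simp add: top_var_monoms_def)
  show sum_eq: "?m + (m' - ?m) = m'"
    by (rule add_minus_cancel_le[OF le])
  have "keys (m' - ?m) \<subseteq> {i..<n}"
    using assms(2) by (auto simp: in_keys_iff lookup_minus lookup_monom_prefix monoms_def subset_iff
        split: if_splits)
  then show "m' - ?m \<in> horner_tails n d ?m"
    using sum_eq assms(2) top by (simp add: horner_tails_def monoms_def)
qed

lemma card_horner_fiber:
  assumes "i < n" and "m' \<in> monoms n d"
  shows "card {p \<in> Sigma (top_var_monoms n d i) (horner_tails n d). fst p + snd p = m'} = lookup m' i"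
proof -
  let ?f = "\<lambda>t. (monom_prefix m' i t, m' - monom_prefix m' i t)"
  have "{p \<in> Sigma (top_var_monoms n d i) (horner_tails n d). fst p + snd p = m'} = ?f ` {1..lookup m' i}"
  proof (rule Set.set_eqI, rule iffI)
    fix p assume "p \<in> {p \<in> Sigma (top_var_monoms n d i) (horner_tails n d). fst p + snd p = m'}"
    then obtain m r where "p = (m, r)" "m \<in> top_var_monoms n d i" "r \<in> horner_tails n d m" "m + r = m'"
      by auto
    then show "p \<in> ?f ` {1..lookup m' i}"
      using horner_fiber_subset[of m n d i r] by force
  next
    fix p assume "p \<in> ?f ` {1..lookup m' i}"
    then show "p \<in> {p \<in> Sigma (top_var_monoms n d i) (horner_tails n d). fst p + snd p = m'}"
      using monom_prefix_in_fiber[OF assms] by auto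
  qed
  moreover have "inj_on ?f {1..lookup m' i}"
    by (rule inj_onI) (metis (no_types) fst_conv lookup_monom_prefix less_irrefl)
  ultimately show ?thesis by (simp add: card_image)
qed

text \<open>Reverse-mode differentiation of the Horner scheme: by \<open>card_horner_fiber\<close>, each monomial
  \<open>m'\<close> arises in exactly \<open>lookup m' i\<close> ways as \<open>m + r\<close> with \<open>top_var m = i\<close>.\<close>
lemma horner_gradient_eq:
  assumes "i < n"
  shows "(\<Sum>m\<in>top_var_monoms n d i. horner n d \<gamma> y m * eval_monom y n (m - \<delta> i)) =
         (\<Sum>m'\<in>monoms n d. \<gamma> m' * of_nat (lookup m' i) * eval_monom y n (m' - \<delta> i))"
proof -
  let ?G = "\<lambda>p. \<gamma> (fst p + snd p) * eval_monom y n (fst p + snd p - \<delta> i)"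
  let ?S = "Sigma (top_var_monoms n d i) (horner_tails n d)"
  have "(\<Sum>m\<in>top_var_monoms n d i. horner n d \<gamma> y m * eval_monom y n (m - \<delta> i)) =
        (\<Sum>m\<in>top_var_monoms n d i. \<Sum>r\<in>horner_tails n d m. ?G (m, r))"
  proof (rule sum.cong[OF refl])
    fix m assume "m \<in> top_var_monoms n d i"
    then have "lookup m i \<noteq> 0"
      using top_var_in_keys[of m] by (auto simp: top_var_monoms_def in_keys_iff)
    then have "r + (m - \<delta> i) = m + r - \<delta> i" for r
      by (intro poly_mapping_eqI) (auto simp: lookup_add lookup_minus lookup_single when_def)
    then show "horner n d \<gamma> y m * eval_monom y n (m - \<delta> i) = (\<Sum>r\<in>horner_tails n d m. ?G (m, r))"
      unfolding horner_def sum_distrib_right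
      by (intro sum.cong refl) (simp add: mult.assoc flip: eval_monom_add)
  qed
  also have "\<dots> = sum ?G ?S"
    by (simp add: sum.Sigma split_def)
  also have "\<dots> = (\<Sum>m'\<in>monoms n d. sum ?G {p \<in> ?S. fst p + snd p = m'})"
  proof (rule sum.group[symmetric])
    show "finite ?S" "finite (monoms n d)" by auto
    show "(\<lambda>p. fst p + snd p) ` ?S \<subseteq> monoms n d"
      by (auto simp: top_var_monoms_def horner_tails_def monoms_def keys_add_nat subset_iff)
  qed
  also have "\<dots> = (\<Sum>m'\<in>monoms n d. \<gamma> m' * of_nat (lookup m' i) * eval_monom y n (m' - \<delta> i))"
  proof (rule sum.cong[OF refl])
    fix m' assume m': "m' \<in> monoms n d"
    have "sum ?G {p \<in> ?S. fst p + snd p = m'} =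
          (\<Sum>p\<in>{p \<in> ?S. fst p + snd p = m'}. \<gamma> m' * eval_monom y n (m' - \<delta> i))"
      by (rule sum.cong) auto
    then show "sum ?G {p \<in> ?S. fst p + snd p = m'} = \<gamma> m' * of_nat (lookup m' i) * eval_monom y n (m' - \<delta> i)"
      using card_horner_fiber[OF assms m'] by (simp add: mult_ac)
  qed
  finally show ?thesis .
qed

lemma sum_card_horner_children_le: "(\<Sum>m\<in>monoms n d. card (horner_children n d m)) \<le> card (monoms n d)"
proof -
  have "(\<Sum>m\<in>monoms n d. card (horner_children n d m)) = card (Sigma (monoms n d) (horner_children n d))"
    by simp
  also have "\<dots> \<le> card (monoms n d)"
  proof (rule card_inj_on_le[where f="\<lambda>p. fst p + \<delta> (snd p)"])
    show "inj_on (\<lambda>p. fst p + \<delta> (snd p)) (Sigma (monoms n d) (horner_children n d))"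
    proof (rule inj_onI, clarsimp)
      fix m i m' j
      assume "i \<in> horner_children n d m" "j \<in> horner_children n d m'" and eq: "m + \<delta> i = m' + \<delta> j"
      then have "i = j"
        using horner_childrenD top_var_add_delta by metis
      then show "m = m' \<and> i = j" using eq by simp
    qed
    show "(\<lambda>p. fst p + \<delta> (snd p)) ` Sigma (monoms n d) (horner_children n d) \<subseteq> monoms n d"
      using horner_childrenD monoms_add_delta by fastforce
  qed simp
  finally show ?thesis .
qed

lemma sum_card_top_var_monoms_le: "(\<Sum>i<n. card (top_var_monoms n d i)) \<le> card (monoms n d)"
proof -
  have "(\<Sum>i<n. card (top_var_monoms n d i)) = card (Sigma {..<n} (top_var_monoms n d))"
    by simp
  also have "\<dots> \<le> card (monoms n d)"
    by (rule card_inj_on_le[where f=snd]) (auto simp: inj_on_def top_var_monoms_def)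
  finally show ?thesis .
qed

lemma slp_extends_monomials:
  assumes "slp_ok N B \<Gamma>" and "0 \<le> B" and "\<And>i. i < n \<Longrightarrow> available N B (computed \<Gamma>) (y i)"
  shows "\<exists>\<Gamma>'. slp_extends N B \<Gamma> \<Gamma>' (card (monoms n d)) \<and>
           (\<forall>m\<in>monoms n d. available N B (computed \<Gamma>') (eval_monom y n m))"
proof -
  let ?c = "\<lambda>m. if m = 0 then 0 else 1 :: nat"
  obtain \<Gamma>' where \<Gamma>': "slp_extends N B \<Gamma> \<Gamma>' (\<Sum>m\<in>monoms n d. ?c m)"
    "\<forall>m\<in>monoms n d. available N B (computed \<Gamma>') (eval_monom y n m)"
  proof (atomize_elim, rule slp_extends_by_rank[OF finite_monoms assms(1), where rank=mon_deg])
    fix m \<Gamma>1 assume m: "m \<in> monoms n d" and \<Gamma>1: "slp_ok N B \<Gamma>1" "computed \<Gamma> \<subseteq> computed \<Gamma>1"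
      and IH: "\<forall>m'\<in>monoms n d. mon_deg m' < mon_deg m \<longrightarrow> available N B (computed \<Gamma>1) (eval_monom y n m')"
    show "\<exists>\<Gamma>2. slp_extends N B \<Gamma>1 \<Gamma>2 (?c m) \<and> available N B (computed \<Gamma>2) (eval_monom y n m)"
    proof (cases "m = 0")
      case True
      then show ?thesis using slp_extends_refl[OF \<Gamma>1(1)] available_1[OF assms(2)] by auto
    next
      case False
      let ?v = "top_var m"
      have v: "?v < n" "lookup m ?v \<noteq> 0"
        using top_var_monom[OF m False] by auto
      then have m_eq: "m = (m - \<delta> ?v) + \<delta> ?v"
        by (simp add: minus_delta_plus_delta)
      then have "mon_deg (m - \<delta> ?v) < mon_deg m"
        by (metis mon_deg_add mon_deg_single less_add_one)
      then have "available N B (computed \<Gamma>1) (eval_monom y n (m - \<delta> ?v))"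
        using IH monoms_minus_delta[OF m] by blast
      moreover have "available N B (computed \<Gamma>1) (y ?v)"
        using assms(3)[OF v(1)] \<Gamma>1(2) available_mono by blast
      moreover have "eval_monom y n m = eval_monom y n (m - \<delta> ?v) * y ?v"
        by (subst m_eq) (simp only: eval_monom_add eval_monom_delta[OF v(1)])
      ultimately show ?thesis
        using slp_extends_op[OF \<Gamma>1(1), of "eval_monom y n (m - \<delta> ?v)" "y ?v" OMul] False
        by (auto intro: available_member)
    qed
  qed
  have "(\<Sum>m\<in>monoms n d. ?c m) \<le> (\<Sum>m\<in>monoms n d. 1)"
    by (intro sum_mono) simp
  then have "(\<Sum>m\<in>monoms n d. ?c m) \<le> card (monoms n d)"
    by (simp only: card_eq_sum)
  then show ?thesis
    using slp_extends_mono[OF \<Gamma>'(1)] \<Gamma>'(2) by blast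
qed

lemma slp_extends_horner:
  assumes "slp_ok N B \<Gamma>" and "0 \<le> B"
    and "\<And>i. i < n \<Longrightarrow> available N B (computed \<Gamma>) (y i)"
    and "\<And>m. m \<in> monoms n d \<Longrightarrow> available N B (computed \<Gamma>) (\<gamma> m)"
  shows "\<exists>\<Gamma>'. slp_extends N B \<Gamma> \<Gamma>' (4 * card (monoms n d)) \<and>
           (\<forall>m\<in>monoms n d. available N B (computed \<Gamma>') (horner n d \<gamma> y m))"
proof -
  let ?c = "\<lambda>m. 2 * card (horner_children n d m) + 2"
  obtain \<Gamma>' where \<Gamma>': "slp_extends N B \<Gamma> \<Gamma>' (\<Sum>m\<in>monoms n d. ?c m)"
    "\<forall>m\<in>monoms n d. available N B (computed \<Gamma>') (horner n d \<gamma> y m)"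
  proof (atomize_elim, rule slp_extends_by_rank[OF finite_monoms assms(1), where rank="\<lambda>m. d - mon_deg m"])
    fix m \<Gamma>1 assume m: "m \<in> monoms n d" and \<Gamma>1: "slp_ok N B \<Gamma>1" "computed \<Gamma> \<subseteq> computed \<Gamma>1"
      and IH: "\<forall>m'\<in>monoms n d. d - mon_deg m' < d - mon_deg m \<longrightarrow>
                 available N B (computed \<Gamma>1) (horner n d \<gamma> y m')"
    have "available N B (computed \<Gamma>1) (y i)" "available N B (computed \<Gamma>1) (horner n d \<gamma> y (m + \<delta> i))"
      if "i \<in> horner_children n d m" for i
    proof -
      have i: "i < n" "mon_deg m < d"
        using horner_childrenD[OF that] by auto
      show "available N B (computed \<Gamma>1) (y i)"
        using assms(3)[OF i(1)] \<Gamma>1(2) available_mono by blast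
      have "m + \<delta> i \<in> monoms n d" "d - mon_deg (m + \<delta> i) < d - mon_deg m"
        using monoms_add_delta[OF m i(1,2)] i(2) by (auto simp: mon_deg_add)
      then show "available N B (computed \<Gamma>1) (horner n d \<gamma> y (m + \<delta> i))"
        using IH by blast
    qed
    then obtain \<Gamma>2 where \<Gamma>2: "slp_extends N B \<Gamma>1 \<Gamma>2 (2 * card (horner_children n d m) + 1)"
      "(\<Sum>i\<in>horner_children n d m. y i * horner n d \<gamma> y (m + \<delta> i)) \<in> computed \<Gamma>2"
      using slp_extends_sum_products[where g=y and h="\<lambda>i. horner n d \<gamma> y (m + \<delta> i)",
          OF finite_horner_children \<Gamma>1(1) assms(2)] by blast
    have "available N B (computed \<Gamma>2) (\<gamma> m)"
      using assms(4)[OF m] \<Gamma>1(2) slp_extends_computed[OF \<Gamma>2(1)] available_mono by blast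
    then show "\<exists>\<Gamma>3. slp_extends N B \<Gamma>1 \<Gamma>3 (?c m) \<and> available N B (computed \<Gamma>3) (horner n d \<gamma> y m)"
      using slp_extends_op_after[OF \<Gamma>2(1) _ available_member[OF \<Gamma>2(2)], of "\<gamma> m" OAdd]
      by (auto simp: horner_rec[OF m] intro: available_member)
  qed
  have "(\<Sum>m\<in>monoms n d. ?c m) = 2 * (\<Sum>m\<in>monoms n d. card (horner_children n d m)) + 2 * card (monoms n d)"
    by (simp only: sum.distrib sum_distrib_left[symmetric] card_eq_sum[symmetric] sum_constant) simp
  then have "(\<Sum>m\<in>monoms n d. ?c m) \<le> 4 * card (monoms n d)"
    using sum_card_horner_children_le[of n d] by linarith
  then show ?thesis
    using slp_extends_mono[OF \<Gamma>'(1)] \<Gamma>'(2) by blast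
qed

lemma slp_extends_gradient:
  assumes "slp_ok N B \<Gamma>" and "0 \<le> B"
    and "\<And>i. i < n \<Longrightarrow> available N B (computed \<Gamma>) (y i)"
    and "\<And>m. m \<in> monoms n d \<Longrightarrow> available N B (computed \<Gamma>) (\<gamma> m)"
    and "\<And>m. m \<in> monoms n d \<Longrightarrow> available N B (computed \<Gamma>) (eval_monom y n m)"
  shows "\<exists>\<Gamma>'. slp_extends N B \<Gamma> \<Gamma>' (6 * card (monoms n d) + n) \<and>
    (\<forall>i<n. (\<Sum>m\<in>monoms n d. \<gamma> m * of_nat (lookup m i) * eval_monom y n (m - \<delta> i)) \<in> computed \<Gamma>')"
proof -
  have "\<exists>\<Gamma>1. slp_extends N B \<Gamma> \<Gamma>1 (4 * card (monoms n d)) \<and>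
          (\<forall>m\<in>monoms n d. available N B (computed \<Gamma>1) (horner n d \<gamma> y m))"
    by (rule slp_extends_horner[OF assms(1,2)]) (fact assms(3), fact assms(4))
  then obtain \<Gamma>1 where \<Gamma>1: "slp_extends N B \<Gamma> \<Gamma>1 (4 * card (monoms n d))"
    "\<forall>m\<in>monoms n d. available N B (computed \<Gamma>1) (horner n d \<gamma> y m)"
    by blast
  have "m \<in> top_var_monoms n d i \<Longrightarrow> available N B (computed \<Gamma>1) (eval_monom y n (m - \<delta> i))" for i m
    using available_mono[OF assms(5) slp_extends_computed[OF \<Gamma>1(1)]] monoms_minus_delta
    by (simp add: top_var_monoms_def)
  moreover have "m \<in> top_var_monoms n d i \<Longrightarrow> available N B (computed \<Gamma>1) (horner n d \<gamma> y m)" for i m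
    using \<Gamma>1(2) by (simp add: top_var_monoms_def)
  ultimately obtain \<Gamma>2 where \<Gamma>2: "slp_extends N B \<Gamma>1 \<Gamma>2 (\<Sum>i<n. 2 * card (top_var_monoms n d i) + 1)"
    "\<forall>i\<in>{..<n}. (\<Sum>m\<in>top_var_monoms n d i. horner n d \<gamma> y m * eval_monom y n (m - \<delta> i)) \<in> computed \<Gamma>2"
    using slp_extends_sums_products[where I="top_var_monoms n d" and g="\<lambda>i m. horner n d \<gamma> y m"
        and h="\<lambda>i m. eval_monom y n (m - \<delta> i)", OF finite_lessThan finite_top_var_monoms
        slp_extends_ok[OF \<Gamma>1(1)] assms(2)]
    by blast
  have "(\<Sum>i<n. 2 * card (top_var_monoms n d i) + 1) = 2 * (\<Sum>i<n. card (top_var_monoms n d i)) + n"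
    by (simp add: sum.distrib sum_distrib_left)
  then have "(\<Sum>i<n. 2 * card (top_var_monoms n d i) + 1) \<le> 2 * card (monoms n d) + n"
    using sum_card_top_var_monoms_le[of n d] by linarith
  then have "slp_extends N B \<Gamma> \<Gamma>2 (6 * card (monoms n d) + n)"
    by (intro slp_extends_mono[OF slp_extends_trans[OF \<Gamma>1(1) \<Gamma>2(1)]]) simp
  moreover have "\<forall>i<n. (\<Sum>m\<in>monoms n d. \<gamma> m * of_nat (lookup m i) * eval_monom y n (m - \<delta> i)) \<in> computed \<Gamma>2"
    using \<Gamma>2(2) by (simp add: horner_gradient_eq)
  ultimately show ?thesis by blast
qed

section \<open>The transformed system and its Jacobian\<close>

definition transformed_var :: "int mat \<Rightarrow> nat \<Rightarrow> nat \<Rightarrow> mpoly" where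
  "transformed_var A n i = (\<Sum>k<n. of_int (A $$ (i, k)) * mVar k)"

definition lagrange_coeff :: "nat \<Rightarrow> mpoly list \<Rightarrow> (nat \<Rightarrow>\<^sub>0 nat) \<Rightarrow> mpoly" where
  "lagrange_coeff n f m = (\<Sum>j<length f. of_int (lookup (f ! j) m) * mVar (n + j))"

definition weighted_jacobian :: "nat \<Rightarrow> int mat \<Rightarrow> mpoly list \<Rightarrow> nat \<Rightarrow> mpoly" where
  "weighted_jacobian n A f k = (\<Sum>j<length f. mVar (n + j) * mpderiv k (mtransform n A (f ! j)))"

lemma target_system_eq:
  "target_system n A f u =
     map (mtransform n A) f @ map (weighted_jacobian n A f) [1..<n] @
     [(\<Sum>j<length f. mConst (u ! j) * mVar (n + j)) - 1]"
  unfolding target_system_def Let_def by (simp add: weighted_jacobian_def[abs_def])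

lemma mtransform_eq_sum_monoms:
  assumes "mvars g \<subseteq> {..<n}" and "deg_le g d"
  shows "mtransform n A g = (\<Sum>m\<in>monoms n d. of_int (lookup g m) * eval_monom (transformed_var A n) n m)"
proof -
  have keys_m: "keys m \<subseteq> {..<n}" if "m \<in> keys g" for m
    using assms(1) that by (auto simp: mvars_def)
  have "(\<Prod>i\<in>keys m. transformed_var A n i ^ lookup m i) = eval_monom (transformed_var A n) n m"
    if "m \<in> keys g" for m
    unfolding eval_monom_def using keys_m[OF that]
    by (intro prod.mono_neutral_left) (auto simp: in_keys_iff)
  then have "mtransform n A g = (\<Sum>m\<in>keys g. of_int (lookup g m) * eval_monom (transformed_var A n) n m)"
    unfolding mtransform_def msubst_def mConst_eq_of_int transformed_var_def[symmetric]
    by simp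
  also have "\<dots> = (\<Sum>m\<in>monoms n d. of_int (lookup g m) * eval_monom (transformed_var A n) n m)"
    using assms(2) keys_m
    by (intro sum.mono_neutral_left finite_monoms) (auto simp: monoms_def deg_le_def in_keys_iff)
  finally show ?thesis .
qed

lemma mpderiv_transformed_var: "k < n \<Longrightarrow> mpderiv k (transformed_var A n i) = of_int (A $$ (i, k))"
  by (simp add: transformed_var_def mpderiv_sum mpderiv_mult mpderiv_mVar if_distrib cong: if_cong)

lemma weighted_jacobian_eq:
  assumes "k < n" and "\<And>j. j < length f \<Longrightarrow> mvars (f ! j) \<subseteq> {..<n} \<and> deg_le (f ! j) d"
  shows "weighted_jacobian n A f k =
    (\<Sum>i<n. of_int (A $$ (i, k)) * (\<Sum>m\<in>monoms n d. lagrange_coeff n f m * of_nat (lookup m i) *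
                                       eval_monom (transformed_var A n) n (m - \<delta> i)))"
proof -
  let ?Y = "eval_monom (transformed_var A n) n"
  let ?T = "\<lambda>j m i. of_int (A $$ (i, k)) *
                 (of_int (lookup (f ! j) m) * mVar (n + j) * of_nat (lookup m i) * ?Y (m - \<delta> i))"
  have "mVar (n + j) * mpderiv k (mtransform n A (f ! j)) = (\<Sum>m\<in>monoms n d. \<Sum>i<n. ?T j m i)"
    if "j < length f" for j
  proof -
    have "mtransform n A (f ! j) =
          (\<Sum>m\<in>monoms n d. of_int (lookup (f ! j) m) * eval_monom (transformed_var A n) n m)"
      using assms(2)[OF that] by (blast intro: mtransform_eq_sum_monoms)
    then show ?thesis
      by (simp add: mpderiv_sum mpderiv_mult mpderiv_eval_monom mpderiv_transformed_var[OF assms(1)]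
          sum_distrib_left mult_ac)
  qed
  then have "weighted_jacobian n A f k = (\<Sum>j<length f. \<Sum>m\<in>monoms n d. \<Sum>i<n. ?T j m i)"
    unfolding weighted_jacobian_def by (intro sum.cong) auto
  also have "\<dots> = (\<Sum>j<length f. \<Sum>i<n. \<Sum>m\<in>monoms n d. ?T j m i)"
    by (rule sum.cong[OF refl], rule sum.swap)
  also have "\<dots> = (\<Sum>i<n. \<Sum>j<length f. \<Sum>m\<in>monoms n d. ?T j m i)"
    by (rule sum.swap)
  also have "\<dots> = (\<Sum>i<n. \<Sum>m\<in>monoms n d. \<Sum>j<length f. ?T j m i)"
    by (rule sum.cong[OF refl], rule sum.swap)
  also have "\<dots> = (\<Sum>i<n. of_int (A $$ (i, k)) * (\<Sum>m\<in>monoms n d. lagrange_coeff n f m *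
                     of_nat (lookup m i) * ?Y (m - \<delta> i)))"
    by (simp add: lagrange_coeff_def sum_distrib_left sum_distrib_right mult_ac)
  finally show ?thesis .
qed

section \<open>Polynomials of degree at least two\<close>

lemma slp_general_inputs:
  assumes "0 \<le> b" and "\<And>j m. j < p \<Longrightarrow> ht (lookup (f ! j) m) \<le> b"
    and "\<And>i k. i < n \<Longrightarrow> k < n \<Longrightarrow> ht (A $$ (i, k)) \<le> b" and "length f = p"
  shows "\<exists>\<Gamma>. slp_extends (n + p) b [] \<Gamma> (n * (2 * n + 1) + card (monoms n d) * (2 * p + 2)) \<and>
    (\<forall>i<n. transformed_var A n i \<in> computed \<Gamma>) \<and>
    (\<forall>m\<in>monoms n d. available (n + p) b (computed \<Gamma>) (eval_monom (transformed_var A n) n m)) \<and>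
    (\<forall>m\<in>monoms n d. lagrange_coeff n f m \<in> computed \<Gamma>)"
proof -
  let ?y = "transformed_var A n"
  have "\<exists>\<Gamma>1. slp_extends (n + p) b [] \<Gamma>1 (\<Sum>i<n. 2 * card {..<n} + 1) \<and>
          (\<forall>i\<in>{..<n}. (\<Sum>k<n. of_int (A $$ (i, k)) * mVar k) \<in> computed \<Gamma>1)"
    by (rule slp_extends_sums_products[where I="\<lambda>_. {..<n}"])
      (auto simp: slp_ok_Nil assms(1) intro: available_of_int available_mVar assms(3))
  then obtain \<Gamma>1 where \<Gamma>1: "slp_extends (n + p) b [] \<Gamma>1 (n * (2 * n + 1))" "\<forall>i<n. ?y i \<in> computed \<Gamma>1"
    by (auto simp: transformed_var_def)
  have "\<exists>\<Gamma>2. slp_extends (n + p) b \<Gamma>1 \<Gamma>2 (card (monoms n d)) \<and>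
          (\<forall>m\<in>monoms n d. available (n + p) b (computed \<Gamma>2) (eval_monom ?y n m))"
    by (rule slp_extends_monomials[OF slp_extends_ok[OF \<Gamma>1(1)] assms(1)])
      (simp add: \<Gamma>1(2) available_member)
  then obtain \<Gamma>2 where \<Gamma>2: "slp_extends (n + p) b \<Gamma>1 \<Gamma>2 (card (monoms n d))"
    "\<forall>m\<in>monoms n d. available (n + p) b (computed \<Gamma>2) (eval_monom ?y n m)"
    by blast
  have "\<exists>\<Gamma>3. slp_extends (n + p) b \<Gamma>2 \<Gamma>3 (\<Sum>m\<in>monoms n d. 2 * card {..<p} + 1) \<and>
          (\<forall>m\<in>monoms n d. (\<Sum>j<p. of_int (lookup (f ! j) m) * mVar (n + j)) \<in> computed \<Gamma>3)"
    by (rule slp_extends_sums_products[where I="\<lambda>_. {..<p}", OF finite_monoms _ slp_extends_ok[OF \<Gamma>2(1)]])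
      (auto simp: assms(1) intro: available_of_int available_mVar assms(2))
  then obtain \<Gamma>3 where \<Gamma>3: "slp_extends (n + p) b \<Gamma>2 \<Gamma>3 (card (monoms n d) * (2 * p + 1))"
    "\<forall>m\<in>monoms n d. lagrange_coeff n f m \<in> computed \<Gamma>3"
    by (auto simp: lagrange_coeff_def assms(4))
  have "slp_extends (n + p) b [] \<Gamma>3 (n * (2 * n + 1) + card (monoms n d) * (2 * p + 2))"
    using slp_extends_trans[OF slp_extends_trans[OF \<Gamma>1(1) \<Gamma>2(1)] \<Gamma>3(1)] by (simp add: algebra_simps)
  moreover have "\<forall>i<n. ?y i \<in> computed \<Gamma>3"
    using \<Gamma>1(2) slp_extends_computed[OF \<Gamma>2(1)] slp_extends_computed[OF \<Gamma>3(1)] by blast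
  moreover have "\<forall>m\<in>monoms n d. available (n + p) b (computed \<Gamma>3) (eval_monom ?y n m)"
    using \<Gamma>2(2) slp_extends_available[OF \<Gamma>3(1)] by blast
  ultimately show ?thesis using \<Gamma>3(2) by blast
qed

lemma slp_general_outputs:
  fixes y :: "nat \<Rightarrow> mpoly"
  assumes "slp_ok (n + p) b \<Gamma>" and "0 \<le> b" and "length f = p"
    and "\<And>j m. j < p \<Longrightarrow> ht (lookup (f ! j) m) \<le> b"
    and "\<And>i k. i < n \<Longrightarrow> k < n \<Longrightarrow> ht (A $$ (i, k)) \<le> b"
    and y: "\<And>i. i < n \<Longrightarrow> y i \<in> computed \<Gamma>"
    and monom: "\<And>m. m \<in> monoms n d \<Longrightarrow> available (n + p) b (computed \<Gamma>) (eval_monom y n m)"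
    and coeff: "\<And>m. m \<in> monoms n d \<Longrightarrow> lagrange_coeff n f m \<in> computed \<Gamma>"
  defines "E i \<equiv> \<Sum>m\<in>monoms n d. lagrange_coeff n f m * of_nat (lookup m i) * eval_monom y n (m - \<delta> i)"
  shows "\<exists>\<Gamma>'. slp_extends (n + p) b \<Gamma> \<Gamma>'
            (p * (2 * card (monoms n d) + 1) + (6 * card (monoms n d) + n) + (n - 1) * (2 * n + 1)) \<and>
    (\<forall>j<p. (\<Sum>m\<in>monoms n d. of_int (lookup (f ! j) m) * eval_monom y n m) \<in> computed \<Gamma>') \<and>
    (\<forall>k\<in>{1..<n}. (\<Sum>i<n. of_int (A $$ (i, k)) * E i) \<in> computed \<Gamma>')"
proof -
  have "\<exists>\<Gamma>1. slp_extends (n + p) b \<Gamma> \<Gamma>1 (\<Sum>j<p. 2 * card (monoms n d) + 1) \<and>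
      (\<forall>j\<in>{..<p}. (\<Sum>m\<in>monoms n d. of_int (lookup (f ! j) m) * eval_monom y n m) \<in> computed \<Gamma>1)"
    by (rule slp_extends_sums_products[where I="\<lambda>_. monoms n d", OF finite_lessThan _ assms(1,2)])
      (auto intro: available_of_int assms(4) monom)
  then obtain \<Gamma>1 where \<Gamma>1: "slp_extends (n + p) b \<Gamma> \<Gamma>1 (p * (2 * card (monoms n d) + 1))"
    "\<forall>j<p. (\<Sum>m\<in>monoms n d. of_int (lookup (f ! j) m) * eval_monom y n m) \<in> computed \<Gamma>1"
    by auto
  note sub1 = slp_extends_computed[OF \<Gamma>1(1)]
  have "\<exists>\<Gamma>2. slp_extends (n + p) b \<Gamma>1 \<Gamma>2 (6 * card (monoms n d) + n) \<and> (\<forall>i<n. E i \<in> computed \<Gamma>2)"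
    unfolding E_def
  proof (rule slp_extends_gradient[OF slp_extends_ok[OF \<Gamma>1(1)] assms(2)])
    show "available (n + p) b (computed \<Gamma>1) (y i)" if "i < n" for i
      using y[OF that] sub1 by (blast intro: available_member)
    show "available (n + p) b (computed \<Gamma>1) (lagrange_coeff n f m)" if "m \<in> monoms n d" for m
      using coeff[OF that] sub1 by (blast intro: available_member)
    show "available (n + p) b (computed \<Gamma>1) (eval_monom y n m)" if "m \<in> monoms n d" for m
      by (rule slp_extends_available[OF \<Gamma>1(1) monom[OF that]])
  qed
  then obtain \<Gamma>2 where \<Gamma>2: "slp_extends (n + p) b \<Gamma>1 \<Gamma>2 (6 * card (monoms n d) + n)"
    "\<forall>i<n. E i \<in> computed \<Gamma>2"
    by blast
  have "\<exists>\<Gamma>3. slp_extends (n + p) b \<Gamma>2 \<Gamma>3 (\<Sum>k\<in>{1..<n}. 2 * card {..<n} + 1) \<and>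
      (\<forall>k\<in>{1..<n}. (\<Sum>i<n. of_int (A $$ (i, k)) * E i) \<in> computed \<Gamma>3)"
    by (rule slp_extends_sums_products[where I="\<lambda>_. {..<n}", OF finite_atLeastLessThan _
          slp_extends_ok[OF \<Gamma>2(1)] assms(2)])
      (auto intro: available_of_int assms(5) available_member simp: \<Gamma>2(2))
  then obtain \<Gamma>3 where \<Gamma>3: "slp_extends (n + p) b \<Gamma>2 \<Gamma>3 ((n - 1) * (2 * n + 1))"
    "\<forall>k\<in>{1..<n}. (\<Sum>i<n. of_int (A $$ (i, k)) * E i) \<in> computed \<Gamma>3"
    by auto
  show ?thesis
    using slp_extends_trans[OF slp_extends_trans[OF \<Gamma>1(1) \<Gamma>2(1)] \<Gamma>3(1)] \<Gamma>1(2) \<Gamma>3(2)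
      slp_extends_computed[OF \<Gamma>2(1)] slp_extends_computed[OF \<Gamma>3(1)] by blast
qed

lemma general_case_cost:
  assumes "2 \<le> d" and "1 \<le> p"
  shows "n * (2 * n + 1) + card (monoms n d) * (2 * p + 2) + (p * (2 * card (monoms n d) + 1) +
           (6 * card (monoms n d) + n) + (n - 1) * (2 * n + 1)) \<le> 24 * (p * card (monoms n d))"
proof -
  let ?M = "card (monoms n d)"
  have "n * n \<le> 2 * ?M" "n \<le> ?M" "1 \<le> ?M"
    using square_le_card_monoms[OF assms(1)] card_monoms_ge[of d n] assms(1) card_monoms_pos by auto
  moreover have "?M \<le> p * ?M" "p \<le> p * ?M"
    using assms(2) \<open>1 \<le> ?M\<close> by simp_all
  moreover have "(n - 1) * (2 * n + 1) \<le> n * (2 * n + 1)"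
    by simp
  moreover have "n * (2 * n + 1) = 2 * (n * n) + n" "?M * (2 * p + 2) = 2 * (p * ?M) + 2 * ?M"
    "p * (2 * ?M + 1) = 2 * (p * ?M) + p"
    by (simp_all add: algebra_simps)
  ultimately show ?thesis by linarith
qed

lemma slp_general_case:
  assumes "2 \<le> d" and "1 \<le> p" and "length f = p" and "0 \<le> b"
    and "\<And>j. j < p \<Longrightarrow> mvars (f ! j) \<subseteq> {..<n} \<and> deg_le (f ! j) d"
    and "\<And>j m. j < p \<Longrightarrow> ht (lookup (f ! j) m) \<le> b"
    and "\<And>i k. i < n \<Longrightarrow> k < n \<Longrightarrow> ht (A $$ (i, k)) \<le> b"
  shows "\<exists>\<Gamma>. slp_ok (n + p) b \<Gamma> \<and> length \<Gamma> \<le> 24 * (p * card (monoms n d)) \<and>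
    (\<forall>j<p. mtransform n A (f ! j) \<in> computed \<Gamma>) \<and> (\<forall>k\<in>{1..<n}. weighted_jacobian n A f k \<in> computed \<Gamma>)"
proof -
  let ?y = "transformed_var A n"
  obtain \<Gamma>1 where \<Gamma>1: "slp_extends (n + p) b [] \<Gamma>1 (n * (2 * n + 1) + card (monoms n d) * (2 * p + 2))"
    "\<forall>i<n. ?y i \<in> computed \<Gamma>1" "\<forall>m\<in>monoms n d. available (n + p) b (computed \<Gamma>1) (eval_monom ?y n m)"
    "\<forall>m\<in>monoms n d. lagrange_coeff n f m \<in> computed \<Gamma>1"
    using slp_general_inputs[where A=A and d=d, OF assms(4) _ _ assms(3)] assms(6,7) by blast
  obtain \<Gamma>2 where \<Gamma>2: "slp_extends (n + p) b \<Gamma>1 \<Gamma>2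
      (p * (2 * card (monoms n d) + 1) + (6 * card (monoms n d) + n) + (n - 1) * (2 * n + 1))"
    "\<forall>j<p. (\<Sum>m\<in>monoms n d. of_int (lookup (f ! j) m) * eval_monom ?y n m) \<in> computed \<Gamma>2"
    "\<forall>k\<in>{1..<n}. (\<Sum>i<n. of_int (A $$ (i, k)) * (\<Sum>m\<in>monoms n d. lagrange_coeff n f m *
        of_nat (lookup m i) * eval_monom ?y n (m - \<delta> i))) \<in> computed \<Gamma>2"
    using slp_general_outputs[where A=A and y="?y", OF slp_extends_ok[OF \<Gamma>1(1)] assms(4,3)]
      \<Gamma>1(2-4) assms(6,7) by blast
  have "slp_extends (n + p) b [] \<Gamma>2 (24 * (p * card (monoms n d)))"
    by (rule slp_extends_mono[OF slp_extends_trans[OF \<Gamma>1(1) \<Gamma>2(1)] general_case_cost[OF assms(1,2)]])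
  then have "slp_ok (n + p) b \<Gamma>2 \<and> length \<Gamma>2 \<le> 24 * (p * card (monoms n d))"
    by (simp add: slp_extends_Nil)
  moreover have "mtransform n A (f ! j) \<in> computed \<Gamma>2" if "j < p" for j
    using \<Gamma>2(2) that mtransform_eq_sum_monoms[of "f ! j" n d A] assms(5)[OF that] by simp
  moreover have "\<forall>k\<in>{1..<n}. weighted_jacobian n A f k \<in> computed \<Gamma>2"
    using \<Gamma>2(3) weighted_jacobian_eq[of _ n f d A] assms(3,5) by auto
  ultimately show ?thesis by blast
qed

section \<open>Linear polynomials\<close>

definition lin_coeff :: "int mat \<Rightarrow> nat \<Rightarrow> mpoly \<Rightarrow> nat \<Rightarrow> int" where
  "lin_coeff A n g k = (\<Sum>i<n. lookup g (\<delta> i) * A $$ (i, k))"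

lemma mtransform_linear:
  assumes "mvars g \<subseteq> {..<n}" and "deg_le g 1"
  shows "mtransform n A g = of_int (lookup g 0) + (\<Sum>k<n. of_int (lin_coeff A n g k) * mVar k)"
proof -
  have "inj_on \<delta> {..<n}"
    by (rule inj_onI) (metis lookup_single_eq lookup_single_not_eq one_neq_zero)
  moreover have "0 \<notin> \<delta> ` {..<n}"
    using add_delta_neq_0[of 0] by auto
  ultimately have "mtransform n A g = of_int (lookup g 0) + (\<Sum>i<n. of_int (lookup g (\<delta> i)) * transformed_var A n i)"
    using mtransform_eq_sum_monoms[OF assms, of A] by (simp add: monoms_1 sum.reindex eval_monom_delta)
  also have "(\<Sum>i<n. of_int (lookup g (\<delta> i)) * transformed_var A n i) =
             (\<Sum>i<n. \<Sum>k<n. of_int (lookup g (\<delta> i)) * of_int (A $$ (i, k)) * mVar k)"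
    by (simp add: transformed_var_def sum_distrib_left mult.assoc)
  also have "\<dots> = (\<Sum>k<n. \<Sum>i<n. of_int (lookup g (\<delta> i)) * of_int (A $$ (i, k)) * mVar k)"
    by (rule sum.swap)
  also have "\<dots> = (\<Sum>k<n. of_int (lin_coeff A n g k) * mVar k)"
    by (simp add: lin_coeff_def sum_distrib_right)
  finally show ?thesis .
qed

lemma mpderiv_affine:
  "k < n \<Longrightarrow> mpderiv k (of_int c + (\<Sum>k'<n. of_int (w k') * mVar k')) = of_int (w k)"
  by (simp add: mpderiv_add mpderiv_sum mpderiv_mult mpderiv_mVar if_distrib cong: if_cong)

lemma weighted_jacobian_linear:
  assumes "k < n" and "\<And>j. j < length f \<Longrightarrow> mvars (f ! j) \<subseteq> {..<n} \<and> deg_le (f ! j) 1"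
  shows "weighted_jacobian n A f k = (\<Sum>j<length f. of_int (lin_coeff A n (f ! j) k) * mVar (n + j))"
  unfolding weighted_jacobian_def
proof (intro sum.cong refl)
  fix j assume "j \<in> {..<length f}"
  then have "mpderiv k (mtransform n A (f ! j)) = of_int (lin_coeff A n (f ! j) k)"
    using assms(2)[of j] by (simp add: mtransform_linear mpderiv_affine[OF assms(1)])
  then show "mVar (n + j) * mpderiv k (mtransform n A (f ! j)) = of_int (lin_coeff A n (f ! j) k) * mVar (n + j)"
    by (simp add: mult.commute)
qed

lemma abs_le_floor_powr: "ht c \<le> b \<Longrightarrow> \<bar>c\<bar> \<le> \<lfloor>2 powr b\<rfloor>"
proof (cases "c = 0")
  case False
  assume "ht c \<le> b"
  have "\<bar>real_of_int c\<bar> = 2 powr (log 2 \<bar>real_of_int c\<bar>)"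
    using False by simp
  also have "\<dots> \<le> 2 powr b"
    using \<open>ht c \<le> b\<close> by (simp add: ht_def)
  finally show ?thesis by (simp add: le_floor_iff)
qed simp

lemma one_le_floor_powr: "0 \<le> b \<Longrightarrow> 1 \<le> \<lfloor>2 powr (b::real)\<rfloor>"
  using ge_one_powr_ge_zero[of 2 b] by simp

lemma ht_floor_powr_square: "0 \<le> b \<Longrightarrow> ht (\<lfloor>2 powr b\<rfloor> * \<lfloor>2 powr b\<rfloor>) \<le> 2 * b"
proof -
  assume b: "0 \<le> b"
  let ?\<beta> = "\<lfloor>2 powr b\<rfloor>"
  have "1 \<le> ?\<beta>" using one_le_floor_powr[OF b] .
  have "log 2 (real_of_int ?\<beta>) \<le> log 2 (2 powr b)"
    using \<open>1 \<le> ?\<beta>\<close> by (subst log_le_cancel_iff) auto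
  then have "log 2 (real_of_int ?\<beta>) \<le> b"
    by simp
  moreover have "ht (?\<beta> * ?\<beta>) = log 2 (real_of_int ?\<beta> * real_of_int ?\<beta>)"
    using \<open>1 \<le> ?\<beta>\<close> by (simp add: ht_def abs_mult)
  then have "ht (?\<beta> * ?\<beta>) = log 2 (real_of_int ?\<beta>) + log 2 (real_of_int ?\<beta>)"
    using \<open>1 \<le> ?\<beta>\<close> by (subst (asm) log_mult) auto
  ultimately show ?thesis by simp
qed

lemma abs_lin_coeff_le:
  assumes "\<And>m. ht (lookup g m) \<le> b" and "\<And>i. i < n \<Longrightarrow> ht (A $$ (i, k)) \<le> b"
  shows "\<bar>lin_coeff A n g k\<bar> \<le> int n * (\<lfloor>2 powr b\<rfloor> * \<lfloor>2 powr b\<rfloor>)"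
proof -
  have "\<bar>lin_coeff A n g k\<bar> \<le> (\<Sum>i<n. \<bar>lookup g (\<delta> i)\<bar> * \<bar>A $$ (i, k)\<bar>)"
    unfolding lin_coeff_def by (rule order_trans[OF sum_abs]) (simp add: abs_mult)
  also have "\<dots> \<le> (\<Sum>i<n. \<lfloor>2 powr b\<rfloor> * \<lfloor>2 powr b\<rfloor>)"
    using assms by (intro sum_mono mult_mono abs_le_floor_powr) auto
  finally show ?thesis by simp
qed

lemma slp_linear_transformed:
  assumes "0 \<le> B" and "1 \<le> K" and "ht K \<le> B"
    and "\<And>j. j < p \<Longrightarrow> ht (c j) \<le> B"
    and "\<And>j k. j < p \<Longrightarrow> k < n \<Longrightarrow> \<bar>w j k\<bar> \<le> int n * K"
  shows "\<exists>\<Gamma>. slp_extends (n + p) B [] \<Gamma> (p * (10 * n + 5)) \<and>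
           (\<forall>j<p. of_int (c j) + (\<Sum>k<n. of_int (w j k) * mVar k) \<in> computed \<Gamma>)"
proof -
  have "\<exists>\<Gamma>. slp_extends (n + p) B [] \<Gamma> (\<Sum>j<p. 10 * n + 5) \<and>
          (\<forall>j\<in>{..<p}. of_int (c j) + (\<Sum>k<n. of_int (w j k) * mVar k) \<in> computed \<Gamma>)"
  proof (rule slp_extends_each[OF finite_lessThan slp_ok_Nil])
    fix j \<Gamma>1 assume j: "j \<in> {..<p}" and \<Gamma>1: "slp_ok (n + p) B \<Gamma>1"
    have "\<exists>\<Gamma>2. slp_extends (n + p) B \<Gamma>1 \<Gamma>2 (4 * card {..<n} + 6 * n + 4) \<and>
            (\<Sum>k<n. of_int (w j k) * mVar k) \<in> computed \<Gamma>2"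
      by (rule slp_extends_int_comb[OF finite_lessThan \<Gamma>1 assms(1) _ assms(2,3)])
        (use j assms(5) in \<open>auto intro: available_mVar\<close>)
    then obtain \<Gamma>2 where \<Gamma>2: "slp_extends (n + p) B \<Gamma>1 \<Gamma>2 (10 * n + 4)"
      "(\<Sum>k<n. of_int (w j k) * mVar k) \<in> computed \<Gamma>2"
      by auto
    show "\<exists>\<Gamma>2. slp_extends (n + p) B \<Gamma>1 \<Gamma>2 (10 * n + 5) \<and>
            of_int (c j) + (\<Sum>k<n. of_int (w j k) * mVar k) \<in> computed \<Gamma>2"
      using slp_extends_op_after[OF \<Gamma>2(1) available_of_int available_member[OF \<Gamma>2(2)], of "c j" OAdd]
        assms(4) j by (auto simp: add.commute)
  qed
  then obtain \<Gamma> where "slp_extends (n + p) B [] \<Gamma> (\<Sum>j<p. 10 * n + 5)"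
    "\<forall>j\<in>{..<p}. of_int (c j) + (\<Sum>k<n. of_int (w j k) * mVar k) \<in> computed \<Gamma>"
    by blast
  then show ?thesis by (intro exI[of _ \<Gamma>]) (simp add: mult.commute)
qed

lemma slp_linear_jacobian:
  assumes "slp_ok (n + p) B \<Gamma>" and "0 \<le> B" and "1 \<le> K" and "ht K \<le> B"
    and "\<And>j k. j < p \<Longrightarrow> k < n \<Longrightarrow> \<bar>w j k\<bar> \<le> int n * K"
  shows "\<exists>\<Gamma>'. slp_extends (n + p) B \<Gamma> \<Gamma>' (p * (2 * n + 1) + (n - 1) * (4 * p + 1)) \<and>
           (\<forall>k\<in>{1..<n}. (\<Sum>j<p. of_int (w j k) * mVar (n + j)) \<in> computed \<Gamma>')"
proof -
  have "\<exists>\<Gamma>1. slp_extends (n + p) B \<Gamma> \<Gamma>1 (\<Sum>j<p. 2 * n + 1) \<and>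
          (\<forall>j\<in>{..<p}. \<forall>v. \<bar>v\<bar> \<le> int n \<longrightarrow> of_int v * mVar (n + j) \<in> computed \<Gamma>1)"
  proof (rule slp_extends_family[OF finite_lessThan assms(1)])
    fix j \<Gamma>1 assume "j \<in> {..<p}" "slp_ok (n + p) B \<Gamma>1"
    then show "\<exists>\<Gamma>2. slp_extends (n + p) B \<Gamma>1 \<Gamma>2 (2 * n + 1) \<and>
                 (\<forall>v. \<bar>v\<bar> \<le> int n \<longrightarrow> of_int v * mVar (n + j) \<in> computed \<Gamma>2)"
      using slp_extends_multiples[OF _ assms(2) available_mVar, of "n + p" \<Gamma>1 "n + j"] by simp
  qed blast
  then obtain \<Gamma>1 where \<Gamma>1: "slp_extends (n + p) B \<Gamma> \<Gamma>1 (p * (2 * n + 1))"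
    "\<forall>j<p. \<forall>v. \<bar>v\<bar> \<le> int n \<longrightarrow> of_int v * mVar (n + j) \<in> computed \<Gamma>1"
    by auto
  have "\<exists>\<Gamma>2. slp_extends (n + p) B \<Gamma>1 \<Gamma>2 (\<Sum>k\<in>{1..<n}. 4 * card {..<p} + 1) \<and>
          (\<forall>k\<in>{1..<n}. (\<Sum>j<p. of_int (w j k) * mVar (n + j)) \<in> computed \<Gamma>2)"
  proof (rule slp_extends_each[OF finite_atLeastLessThan slp_extends_ok[OF \<Gamma>1(1)]])
    fix k \<Gamma>2 assume k: "k \<in> {1..<n}" and \<Gamma>2: "slp_ok (n + p) B \<Gamma>2" "computed \<Gamma>1 \<subseteq> computed \<Gamma>2"
    show "\<exists>\<Gamma>3. slp_extends (n + p) B \<Gamma>2 \<Gamma>3 (4 * card {..<p} + 1) \<and>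
            (\<Sum>j<p. of_int (w j k) * mVar (n + j)) \<in> computed \<Gamma>3"
      by (rule slp_extends_comb_of_multiples[OF finite_lessThan \<Gamma>2(1) assms(2-4), where Q=n])
        (use k \<Gamma>1(2) \<Gamma>2(2) assms(5) in \<open>auto intro: available_mVar\<close>)
  qed
  then obtain \<Gamma>2 where "slp_extends (n + p) B \<Gamma>1 \<Gamma>2 ((n - 1) * (4 * p + 1))"
    "\<forall>k\<in>{1..<n}. (\<Sum>j<p. of_int (w j k) * mVar (n + j)) \<in> computed \<Gamma>2"
    by auto
  then show ?thesis using slp_extends_trans[OF \<Gamma>1(1)] by blast
qed

lemma deg_le_mono: "deg_le g d \<Longrightarrow> d \<le> d' \<Longrightarrow> deg_le g d'"
  by (auto simp: deg_le_def)

lemma linear_case_cost: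
  fixes n p :: nat
  assumes "1 \<le> n" and "1 \<le> p"
  shows "p * (10 * n + 5) + (p * (2 * n + 1) + (n - 1) * (4 * p + 1)) \<le> 24 * (p * n)"
proof -
  have "p \<le> p * n" "n \<le> p * n" "(n - 1) * (4 * p + 1) \<le> n * (4 * p + 1)"
    using assms by simp_all
  moreover have "p * (10 * n + 5) = 10 * (p * n) + 5 * p" "p * (2 * n + 1) = 2 * (p * n) + p"
    "n * (4 * p + 1) = 4 * (p * n) + n"
    by (simp_all add: algebra_simps)
  ultimately show ?thesis by linarith
qed

lemma slp_linear_case:
  assumes "d \<le> 1" and "1 \<le> n" and "1 \<le> p" and "length f = p" and "0 \<le> b"
    and "\<And>j. j < p \<Longrightarrow> mvars (f ! j) \<subseteq> {..<n} \<and> deg_le (f ! j) d"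
    and "\<And>j m. j < p \<Longrightarrow> ht (lookup (f ! j) m) \<le> b"
    and "\<And>i k. i < n \<Longrightarrow> k < n \<Longrightarrow> ht (A $$ (i, k)) \<le> b"
  shows "\<exists>\<Gamma>. slp_ok (n + p) (2 * b) \<Gamma> \<and> length \<Gamma> \<le> 24 * (p * n) \<and>
    (\<forall>j<p. mtransform n A (f ! j) \<in> computed \<Gamma>) \<and> (\<forall>k\<in>{1..<n}. weighted_jacobian n A f k \<in> computed \<Gamma>)"
proof -
  define K where "K = \<lfloor>2 powr b\<rfloor> * \<lfloor>2 powr b\<rfloor>"
  have K: "1 \<le> K" "ht K \<le> 2 * b" and b2: "0 \<le> 2 * b"
    using mult_mono[OF one_le_floor_powr one_le_floor_powr, of b b] ht_floor_powr_square assms(5)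
    by (simp_all add: K_def)
  have w: "\<bar>lin_coeff A n (f ! j) k\<bar> \<le> int n * K" if "j < p" "k < n" for j k
    unfolding K_def using that assms(7,8) by (intro abs_lin_coeff_le) auto
  have c: "ht (lookup (f ! j) 0) \<le> 2 * b" if "j < p" for j
    using assms(5) assms(7)[OF that, of 0] by linarith
  have "\<exists>\<Gamma>1. slp_extends (n + p) (2 * b) [] \<Gamma>1 (p * (10 * n + 5)) \<and>
    (\<forall>j<p. of_int (lookup (f ! j) 0) + (\<Sum>k<n. of_int (lin_coeff A n (f ! j) k) * mVar k) \<in> computed \<Gamma>1)"
    by (rule slp_linear_transformed[OF b2 K]) (fact c, fact w)
  then obtain \<Gamma>1 where \<Gamma>1: "slp_extends (n + p) (2 * b) [] \<Gamma>1 (p * (10 * n + 5))"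
    "\<forall>j<p. of_int (lookup (f ! j) 0) + (\<Sum>k<n. of_int (lin_coeff A n (f ! j) k) * mVar k) \<in> computed \<Gamma>1"
    by blast
  have "\<exists>\<Gamma>2. slp_extends (n + p) (2 * b) \<Gamma>1 \<Gamma>2 (p * (2 * n + 1) + (n - 1) * (4 * p + 1)) \<and>
    (\<forall>k\<in>{1..<n}. (\<Sum>j<p. of_int (lin_coeff A n (f ! j) k) * mVar (n + j)) \<in> computed \<Gamma>2)"
    by (rule slp_linear_jacobian[OF slp_extends_ok[OF \<Gamma>1(1)] b2 K]) (fact w)
  then obtain \<Gamma>2 where \<Gamma>2: "slp_extends (n + p) (2 * b) \<Gamma>1 \<Gamma>2 (p * (2 * n + 1) + (n - 1) * (4 * p + 1))"
    "\<forall>k\<in>{1..<n}. (\<Sum>j<p. of_int (lin_coeff A n (f ! j) k) * mVar (n + j)) \<in> computed \<Gamma>2"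
    by blast
  have "slp_extends (n + p) (2 * b) [] \<Gamma>2 (24 * (p * n))"
    by (rule slp_extends_mono[OF slp_extends_trans[OF \<Gamma>1(1) \<Gamma>2(1)] linear_case_cost[OF assms(2,3)]])
  moreover have lin: "mvars (f ! j) \<subseteq> {..<n} \<and> deg_le (f ! j) 1" if "j < p" for j
    using assms(1) assms(6)[OF that] deg_le_mono by blast
  then have "\<forall>j<p. mtransform n A (f ! j) \<in> computed \<Gamma>2"
    using \<Gamma>1(2) slp_extends_computed[OF \<Gamma>2(1)] by (auto simp: mtransform_linear)
  moreover have "\<forall>k\<in>{1..<n}. weighted_jacobian n A f k \<in> computed \<Gamma>2"
    using \<Gamma>2(2) lin assms(4) by (simp add: weighted_jacobian_linear)
  ultimately show ?thesis by (auto simp: slp_extends_Nil)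
qed

lemma slp_transformed_system:
  assumes "1 \<le> n" and "1 \<le> p" and "length f = p" and "0 \<le> b"
    and "\<forall>j<p. mvars (f ! j) \<subseteq> {..<n} \<and> deg_le (f ! j) d \<and> poly_ht_le (f ! j) b"
    and "\<forall>i<n. \<forall>k<n. ht (A $$ (i, k)) \<le> b"
  shows "\<exists>\<Gamma>. slp_ok (n + p) (2 * b) \<Gamma> \<and> length \<Gamma> \<le> 24 * (p * ((n + d) choose d) + p * n) \<and>
    (\<forall>j<p. mtransform n A (f ! j) \<in> computed \<Gamma>) \<and> (\<forall>k\<in>{1..<n}. weighted_jacobian n A f k \<in> computed \<Gamma>)"
proof -
  have f: "\<And>j. j < p \<Longrightarrow> mvars (f ! j) \<subseteq> {..<n} \<and> deg_le (f ! j) d"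
    and ht_f: "\<And>j m. j < p \<Longrightarrow> ht (lookup (f ! j) m) \<le> b"
    and ht_A: "\<And>i k. i < n \<Longrightarrow> k < n \<Longrightarrow> ht (A $$ (i, k)) \<le> b"
    using assms(4-6) ht_lookup_le by auto
  show ?thesis
  proof (cases "2 \<le> d")
    case True
    then obtain \<Gamma> where "slp_ok (n + p) b \<Gamma>" "length \<Gamma> \<le> 24 * (p * card (monoms n d))"
      "\<forall>j<p. mtransform n A (f ! j) \<in> computed \<Gamma>" "\<forall>k\<in>{1..<n}. weighted_jacobian n A f k \<in> computed \<Gamma>"
      using slp_general_case[OF True assms(2-4) f ht_f ht_A] by blast
    moreover have "b \<le> 2 * b" using assms(4) by simp
    ultimately show ?thesis
      by (intro exI[of _ \<Gamma>]) (auto simp: card_monoms algebra_simps intro: slp_ok_mono)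
  next
    case False
    then show ?thesis
      using slp_linear_case[OF _ assms(1-4) f ht_f ht_A] by fastforce
  qed
qed

lemma slp_extends_affine_form:
  assumes "slp_ok (n + p) B \<Gamma>" and "0 \<le> B" and "\<And>j. j < p \<Longrightarrow> ht (u j) \<le> B"
  shows "\<exists>\<Gamma>'. slp_extends (n + p) B \<Gamma> \<Gamma>' (2 * p + 2) \<and>
           (\<Sum>j<p. mConst (u j) * mVar (n + j)) - 1 \<in> computed \<Gamma>'"
proof -
  have "\<exists>\<Gamma>1. slp_extends (n + p) B \<Gamma> \<Gamma>1 (2 * card {..<p} + 1) \<and>
          (\<Sum>j<p. of_int (u j) * mVar (n + j)) \<in> computed \<Gamma>1"
    by (rule slp_extends_sum_products[OF finite_lessThan assms(1,2)])
      (auto intro: available_of_int available_mVar assms(3))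
  then obtain \<Gamma>1 where "slp_extends (n + p) B \<Gamma> \<Gamma>1 (2 * p + 1)"
    "(\<Sum>j<p. of_int (u j) * mVar (n + j)) \<in> computed \<Gamma>1"
    by auto
  from slp_extends_op_after[OF this(1) available_member[OF this(2)] available_1[OF assms(2)], of OSub]
  show ?thesis by (auto simp: mConst_eq_of_int)
qed

lemma slp_target_system:
  assumes "1 \<le> n" and "1 \<le> p" and "length f = p" and "0 \<le> b"
    and "\<forall>j<p. mvars (f ! j) \<subseteq> {..<n} \<and> deg_le (f ! j) d \<and> poly_ht_le (f ! j) b \<and> ht (u ! j) \<le> b"
    and "\<forall>i<n. \<forall>k<n. ht (A $$ (i, k)) \<le> b"
  shows "\<exists>\<Gamma>. slp_ok (n + p) (2 * b) \<Gamma> \<and> length \<Gamma> \<le> 28 * (p * ((n + d) choose d) + p * n) \<and>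
    set (target_system n A f u) \<subseteq> computed \<Gamma>"
proof -
  obtain \<Gamma> where \<Gamma>: "slp_ok (n + p) (2 * b) \<Gamma>" "length \<Gamma> \<le> 24 * (p * ((n + d) choose d) + p * n)"
    "\<forall>j<p. mtransform n A (f ! j) \<in> computed \<Gamma>" "\<forall>k\<in>{1..<n}. weighted_jacobian n A f k \<in> computed \<Gamma>"
    using slp_transformed_system[OF assms(1-4) _ assms(6)] assms(5) by blast
  have "\<exists>\<Gamma>'. slp_extends (n + p) (2 * b) \<Gamma> \<Gamma>' (2 * p + 2) \<and>
      (\<Sum>j<p. mConst (u ! j) * mVar (n + j)) - 1 \<in> computed \<Gamma>'"
    by (rule slp_extends_affine_form[OF \<Gamma>(1)]) (use assms(4,5) in auto)
  then obtain \<Gamma>' where \<Gamma>': "slp_extends (n + p) (2 * b) \<Gamma> \<Gamma>' (2 * p + 2)"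
    "(\<Sum>j<p. mConst (u ! j) * mVar (n + j)) - 1 \<in> computed \<Gamma>'"
    by blast
  have "p \<le> p * n"
    using assms(1) by simp
  then have "2 * p + 2 \<le> 4 * (p * n)"
    using assms(2) by linarith
  then have "length \<Gamma>' \<le> 28 * (p * ((n + d) choose d) + p * n)"
    using \<Gamma>(2) \<Gamma>'(1) by (auto simp: slp_extends_def)
  moreover have "\<forall>j<p. mtransform n A (f ! j) \<in> computed \<Gamma>'"
    "\<forall>k\<in>{1..<n}. weighted_jacobian n A f k \<in> computed \<Gamma>'"
    using \<Gamma>(3,4) slp_extends_computed[OF \<Gamma>'(1)] by blast+
  then have "set (target_system n A f u) \<subseteq> computed \<Gamma>'"
    using \<Gamma>'(2) assms(3) by (auto simp: target_system_eq in_set_conv_nth)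
  ultimately show ?thesis
    using slp_extends_ok[OF \<Gamma>'(1)] by blast
qed

theorem lemma3:
  "\<exists>C::real. C > 0 \<and>
    (\<forall>(n::nat) (p::nat) (d::nat) (b::real) (f::mpoly list) (A::int mat) (u::int list).
      1 \<le> n \<longrightarrow> 1 \<le> p \<longrightarrow> length f = p \<longrightarrow> length u = p \<longrightarrow>
      A \<in> carrier_mat n n \<longrightarrow> invertible_mat A \<longrightarrow>
      (\<forall>i<p. mvars (f ! i) \<subseteq> {..<n} \<and> deg_le (f ! i) d \<and> poly_ht_le (f ! i) b
              \<and> ht (u ! i) \<le> b) \<longrightarrow>
      (\<forall>i<n. \<forall>j<n. ht (A $$ (i, j)) \<le> b) \<longrightarrow>
      (\<exists>\<Gamma>. slp_wf (n + p) \<Gamma>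
          \<and> real (length \<Gamma>) \<le> C * real (p * ((n + d) choose d) + p * n)
          \<and> (\<forall>c\<in>slp_consts \<Gamma>. ht c \<le> C * b)
          \<and> set (target_system n A f u) \<subseteq> set (slp_results \<Gamma>)))"
proof (intro exI[of _ 28] conjI allI impI)
  fix n p d :: nat and b :: real and f :: "mpoly list" and A :: "int mat" and u :: "int list"
  assume n: "1 \<le> n" and p: "1 \<le> p" and f: "length f = p" and "length u = p"
    and hyps: "\<forall>i<p. mvars (f ! i) \<subseteq> {..<n} \<and> deg_le (f ! i) d \<and> poly_ht_le (f ! i) b \<and> ht (u ! i) \<le> b"
    and A: "\<forall>i<n. \<forall>j<n. ht (A $$ (i, j)) \<le> b"
  have "0 \<le> b"
    using hyps p ht_nonneg[of "u ! 0"] by force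
  then obtain \<Gamma> where "slp_ok (n + p) (2 * b) \<Gamma>" "length \<Gamma> \<le> 28 * (p * ((n + d) choose d) + p * n)"
    "set (target_system n A f u) \<subseteq> computed \<Gamma>"
    using slp_target_system[OF n p f _ hyps A] by blast
  moreover have "slp_ok (n + p) (28 * b) \<Gamma>"
    using \<open>0 \<le> b\<close> by (intro slp_ok_mono[OF calculation(1)]) simp
  ultimately show "\<exists>\<Gamma>. slp_wf (n + p) \<Gamma> \<and> real (length \<Gamma>) \<le> 28 * real (p * ((n + d) choose d) + p * n) \<and>
      (\<forall>c\<in>slp_consts \<Gamma>. ht c \<le> 28 * b) \<and> set (target_system n A f u) \<subseteq> set (slp_results \<Gamma>)"
    by (intro exI[of _ \<Gamma>]) (auto simp: slp_ok_def computed_def simp flip: of_nat_mult)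
qed simp

end
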